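(* Let $\{A^i\}_{i=1}^N$ and $\{\tilde A^i\}_{i=1}^N$ be injective fMPSs of bond dimension $2n$ with Wall invariant $(+)$, both in canonical form. Then $\{A^i\}_i \sim \{\tilde A^i\}_i$ holds if and only if there exist a unitary matrix $V\in \mathrm{U}(2n)$ and a phase $e^{i\beta}\in \mathrm{U}(1)$ such that $$\tilde A^i = e^{i\beta} V^\dagger A^i V \quad \text{for all } i.$$ In this case $e^{i\beta}$ is unique and $V$ is unique up to multiplication by a $\mathrm{U}(1)$ phase. Moreover, if $u$ and $\tilde u$ are Wall matrices of $\{A^i\}_i$ and $\{\tilde A^i\}_i$ respectively, then $\tilde u = \eta\, V^\dagger u V$ for some sign $\eta\in\{\pm1\}$. All of these statements remain true if the hypothesis $\{A^i\}_i\sim\{\tilde A^i\}_i$ is replaced by $\{A^i\}_i\sim_{\rm PBC}\{\tilde A^i\}_i$.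
   Context: Fix integers $N,n\ge 1$ and a parity function $i\mapsto |i|\in\{0,1\}$ on $\{1,\dots,N\}$. Let $\sigma_x,\sigma_z$ be the Pauli matrices. An fMPS of bond dimension $2n$ is a tuple $\{A^i\}_{i=1}^N$ of complex $2n\times 2n$ matrices for which there is a matrix $Z$ (a grading matrix), unitarily equivalent to $\sigma_z\otimes 1_n$, with $(-1)^{|i|}A^i = Z A^i Z$ for all $i$. It is in canonical form if $\sum_i A^iA^{i\dagger}=1_{2n}$. It is injective with Wall invariant $(+)$ if there is a fixed $l\in\mathbb N$ such that the products $A^{i_1}\cdots A^{i_l}$ over all $(i_1,\dots,i_l)$ span $\mathrm M_{2n}(\mathbb C)$; in that case the grading matrix is unique up to sign and a Wall matrix is $u=\pm Z$ (so $u^2=1$). Two fMPSs are gauge equivalent, $\{A^i\}_i\sim\{\tilde A^i\}_i$, if for every $L\in\mathbb N$ there is $\alpha_L\in\mathbb R$ with $\mathrm{tr}[A^{i_1}\cdots A^{i_L}] = e^{i\alpha_L}\mathrm{tr}[\tilde A^{i_1}\cdots\tilde A^{i_L}]$ for all $i_1,\dots,i_L$. They are gauge equivalent in PBC, $\{A^i\}_i\sim_{\rm PBC}\{\tilde A^i\}_i$, if for every $L$ there is $\alpha_L$ with $\mathrm{tr}[uA^{i_1}\cdots A^{i_L}] = e^{i\alpha_L}\mathrm{tr}[\tilde u\tilde A^{i_1}\cdots\tilde A^{i_L}]$ for all $i_1,\dots,i_L$, where $u,\tilde u$ are the respective Wall matrices. *)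

theory Defs
  imports Complex_Main "Jordan_Normal_Form.Matrix"
begin

definition adj :: "complex mat \<Rightarrow> complex mat" where
  "adj M = mat (dim_col M) (dim_row M) (\<lambda>(i,j). cnj (M $$ (j,i)))"

definition mtrace :: "complex mat \<Rightarrow> complex" where
  "mtrace M = (\<Sum>i<dim_row M. M $$ (i,i))"

definition unitary_mat :: "nat \<Rightarrow> complex mat \<Rightarrow> bool" where
  "unitary_mat d U \<longleftrightarrow> U \<in> carrier_mat d d \<and> adj U * U = 1\<^sub>m d \<and> U * adj U = 1\<^sub>m d"

definition sigmaz_tensor_id :: "nat \<Rightarrow> complex mat" where
  "sigmaz_tensor_id n = mat (2*n) (2*n) (\<lambda>(i,j). if i = j then (if i < n then 1 else -1) else 0)"

definition words :: "nat \<Rightarrow> nat \<Rightarrow> nat list set" where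
  "words N L = {w. length w = L \<and> set w \<subseteq> {1..N}}"

definition wprod :: "nat \<Rightarrow> (nat \<Rightarrow> complex mat) \<Rightarrow> nat list \<Rightarrow> complex mat" where
  "wprod d A w = foldr (\<lambda>i M. A i * M) w (1\<^sub>m d)"

definition grading_matrix :: "nat \<Rightarrow> nat \<Rightarrow> (nat \<Rightarrow> nat) \<Rightarrow> (nat \<Rightarrow> complex mat) \<Rightarrow> complex mat \<Rightarrow> bool" where
  "grading_matrix N n par A Z \<longleftrightarrow>
     Z \<in> carrier_mat (2*n) (2*n) \<and>
     (\<exists>U. unitary_mat (2*n) U \<and> Z = U * sigmaz_tensor_id n * adj U) \<and>
     (\<forall>i\<in>{1..N}. (-1) ^ par i \<cdot>\<^sub>m A i = Z * A i * Z)"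

definition fMPS :: "nat \<Rightarrow> nat \<Rightarrow> (nat \<Rightarrow> nat) \<Rightarrow> (nat \<Rightarrow> complex mat) \<Rightarrow> bool" where
  "fMPS N n par A \<longleftrightarrow>
     (\<forall>i\<in>{1..N}. A i \<in> carrier_mat (2*n) (2*n)) \<and> (\<exists>Z. grading_matrix N n par A Z)"

definition canonical_form :: "nat \<Rightarrow> nat \<Rightarrow> (nat \<Rightarrow> complex mat) \<Rightarrow> bool" where
  "canonical_form N n A \<longleftrightarrow>
     mat (2*n) (2*n) (\<lambda>(r,c). \<Sum>i\<in>{1..N}. (A i * adj (A i)) $$ (r,c)) = 1\<^sub>m (2*n)"

(* injective with Wall invariant (+): for some fixed l, the products of length l
   span M_{2n}(C) (complex linear span, written out entrywise) *)
definition injective_plus :: "nat \<Rightarrow> nat \<Rightarrow> (nat \<Rightarrow> complex mat) \<Rightarrow> bool" where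
  "injective_plus N n A \<longleftrightarrow>
     (\<exists>l::nat. \<forall>M \<in> carrier_mat (2*n) (2*n). \<exists>c :: nat list \<Rightarrow> complex.
        M = mat (2*n) (2*n) (\<lambda>(r,s). \<Sum>w\<in>words N l. c w * wprod (2*n) A w $$ (r,s)))"

definition wall_matrix :: "nat \<Rightarrow> nat \<Rightarrow> (nat \<Rightarrow> nat) \<Rightarrow> (nat \<Rightarrow> complex mat) \<Rightarrow> complex mat \<Rightarrow> bool" where
  "wall_matrix N n par A u \<longleftrightarrow> (\<exists>Z. grading_matrix N n par A Z \<and> (u = Z \<or> u = - Z))"

definition gauge_equiv :: "nat \<Rightarrow> nat \<Rightarrow> (nat \<Rightarrow> complex mat) \<Rightarrow> (nat \<Rightarrow> complex mat) \<Rightarrow> bool" where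
  "gauge_equiv N n A B \<longleftrightarrow>
     (\<forall>L::nat. \<exists>\<alpha>::real. \<forall>w\<in>words N L.
        mtrace (wprod (2*n) A w) = exp (\<i> * of_real \<alpha>) * mtrace (wprod (2*n) B w))"

definition gauge_equiv_PBC :: "nat \<Rightarrow> nat \<Rightarrow> (nat \<Rightarrow> nat) \<Rightarrow> (nat \<Rightarrow> complex mat) \<Rightarrow> (nat \<Rightarrow> complex mat) \<Rightarrow> bool" where
  "gauge_equiv_PBC N n par A B \<longleftrightarrow>
     (\<exists>u v. wall_matrix N n par A u \<and> wall_matrix N n par B v \<and>
       (\<forall>L::nat. \<exists>\<alpha>::real. \<forall>w\<in>words N L.
          mtrace (u * wprod (2*n) A w) = exp (\<i> * of_real \<alpha>) * mtrace (v * wprod (2*n) B w)))"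

definition gauge_transform :: "nat \<Rightarrow> nat \<Rightarrow> (nat \<Rightarrow> complex mat) \<Rightarrow> (nat \<Rightarrow> complex mat) \<Rightarrow> complex mat \<Rightarrow> real \<Rightarrow> bool" where
  "gauge_transform N n A B V \<beta> \<longleftrightarrow>
     unitary_mat (2*n) V \<and> (\<forall>i\<in>{1..N}. B i = exp (\<i> * of_real \<beta>) \<cdot>\<^sub>m (adj V * A i * V))"

end

theory Submission
  imports Defs "Jordan_Normal_Form.Determinant"
begin

text \<open>
  Suppose the (possibly Wall-twisted) traces \<open>tr (P A\<^sub>w)\<close> and \<open>tr (Q B\<^sub>w)\<close> agree up to a phase
  depending only on the length of the word \<open>w\<close>. In canonical form, once products of length \<open>l\<close>
  span all matrices so do all longer ones, and nondegeneracy of the trace pairing makes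
  \<open>A\<^sub>w \<mapsto> B\<^sub>w\<close> a well-defined linear map \<open>\<psi>\<^sub>m\<close> on words of each length \<open>m \<ge> l\<close>, multiplicative
  across lengths. Then \<open>\<psi>\<^sub>l(1)\<close> and \<open>\<psi>\<^sub>l\<^sub>+\<^sub>1(1)\<close> are central, hence scalars, and their ratio
  \<open>\<gamma>\<close> satisfies \<open>B\<^sub>i \<psi>\<^sub>l(Y) = \<gamma> \<psi>\<^sub>l(A\<^sub>i Y)\<close>. A nonzero column of this identity gives
  \<open>T \<noteq> 0\<close> with \<open>B\<^sub>i T = \<gamma> T A\<^sub>i\<close>, and \<open>T\<close> is invertible since a left annihilator of \<open>T\<close>
  would annihilate \<open>B\<^sub>w T = \<gamma>\<^sup>|\<^sup>w\<^sup>| T A\<^sub>w\<close> for all spanning words. By canonical form \<open>T T\<^sup>\<dagger>\<close> is a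
  positive fixed point of the channel \<open>X \<mapsto> \<Sum>\<^sub>i B\<^sub>i X B\<^sub>i\<^sup>\<dagger>\<close>; subtracting the largest scalar
  below it leaves a singular positive fixed point, whose kernel is invariant under all \<open>B\<^sub>i\<^sup>\<dagger>\<close>,
  so injectivity forces it to vanish. Thus \<open>T\<close> is a multiple of a unitary, and comparing the
  trace identity at two consecutive lengths gives \<open>|\<gamma>| = 1\<close>.

  For uniqueness, \<open>V V'\<^sup>\<dagger>\<close> commutes with every \<open>A\<^sub>i\<close> up to a fixed factor \<open>\<omega>\<close>; for an injective
  family such a matrix is scalar and \<open>\<omega> = 1\<close>. The same fact shows that a grading matrix of
  an injective family is unique up to sign, which transports the Wall matrices.
\<close>

section \<open>Conjugate transpose, trace and unitary matrices\<close>

lemma mult_entry: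
  assumes "A \<in> carrier_mat r k" "B \<in> carrier_mat k c" "i < r" "j < c"
  shows "(A * B) $$ (i,j) = (\<Sum>t<k. A $$ (i,t) * B $$ (t,j))"
  using assms by (auto simp: scalar_prod_def lessThan_atLeast0)

lemma row_col_sprod[simp]:
  assumes "i < dim_row A" "j < dim_col B" "dim_col A = dim_row B"
  shows "row A i \<bullet> col B j = (\<Sum>t<dim_row B. A $$ (i,t) * B $$ (t,j))"
  using assms by (auto simp: scalar_prod_def lessThan_atLeast0)

lemma adj_carrier[simp]: "A \<in> carrier_mat r c \<Longrightarrow> adj A \<in> carrier_mat c r"
  by (auto simp: adj_def)
lemma adj_dims[simp]: "dim_row (adj A) = dim_col A" "dim_col (adj A) = dim_row A"
  by (auto simp: adj_def)
lemma adj_index[simp]: "i < dim_col A \<Longrightarrow> j < dim_row A \<Longrightarrow> adj A $$ (i,j) = cnj (A $$ (j,i))"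
  by (auto simp: adj_def)

lemma adj_adj[simp]: "adj (adj A) = A"
  by (rule eq_matI) auto

lemma adj_mult:
  assumes "A \<in> carrier_mat r k" "B \<in> carrier_mat k c"
  shows "adj (A * B) = adj B * adj A"
proof (rule eq_matI)
  fix i j assume "i < dim_row (adj B * adj A)" "j < dim_col (adj B * adj A)"
  then have ij: "i < c" "j < r" using assms by auto
  show "adj (A * B) $$ (i, j) = (adj B * adj A) $$ (i, j)"
    using assms ij
    by (simp add: mult.commute)
qed (use assms in auto)

lemma adj_one[simp]: "adj (1\<^sub>m d) = 1\<^sub>m d"
  by (rule eq_matI) auto

lemma adj_smult: "adj (a \<cdot>\<^sub>m A) = cnj a \<cdot>\<^sub>m adj A"
  by (rule eq_matI) auto

lemma adj_minus: "A \<in> carrier_mat r c \<Longrightarrow> B \<in> carrier_mat r c \<Longrightarrow> adj (A - B) = adj A - adj B"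
  by (rule eq_matI) auto

lemma adj_zero[simp]: "adj (0\<^sub>m r c) = 0\<^sub>m c r"
  by (rule eq_matI) auto

lemma mtrace_mult_comm:
  assumes "A \<in> carrier_mat r c" "B \<in> carrier_mat c r"
  shows "mtrace (A * B) = mtrace (B * A)"
proof -
  have "mtrace (A * B) = (\<Sum>i<r. \<Sum>t<c. A $$ (i,t) * B $$ (t,i))"
    using assms by (simp add: mtrace_def mult_entry[of _ r c _ r])
  also have "\<dots> = (\<Sum>t<c. \<Sum>i<r. B $$ (t,i) * A $$ (i,t))"
    by (subst sum.swap) (simp add: mult.commute)
  also have "\<dots> = mtrace (B * A)"
    using assms by (simp add: mtrace_def mult_entry[of _ c r _ c])
  finally show ?thesis .
qed

lemma mtrace_minus: "A \<in> carrier_mat d d \<Longrightarrow> B \<in> carrier_mat d d \<Longrightarrow> mtrace (A - B) = mtrace A - mtrace B"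
  by (simp add: mtrace_def sum_subtractf)
lemma mtrace_smult: "A \<in> carrier_mat d d \<Longrightarrow> mtrace (a \<cdot>\<^sub>m A) = a * mtrace A"
  by (simp add: mtrace_def sum_distrib_left)
lemma mtrace_one[simp]: "mtrace (1\<^sub>m d) = of_nat d"
  by (simp add: mtrace_def)
lemma mtrace_zero[simp]: "mtrace (0\<^sub>m d d) = 0"
  by (simp add: mtrace_def)

lemma cnj_mtrace: "A \<in> carrier_mat d d \<Longrightarrow> cnj (mtrace A) = mtrace (adj A)"
  by (simp add: mtrace_def)

lemma mtrace_adj_self:
  assumes "X \<in> carrier_mat r c"
  shows "mtrace (adj X * X) = of_real (\<Sum>j<c. \<Sum>i<r. (cmod (X $$ (i,j)))\<^sup>2)"
proof -
  have "mtrace (adj X * X) = (\<Sum>j<c. (adj X * X) $$ (j,j))"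
    using assms by (simp add: mtrace_def)
  also have "\<dots> = (\<Sum>j<c. \<Sum>i<r. cnj (X $$ (i,j)) * X $$ (i,j))"
    by (rule sum.cong, simp, subst mult_entry[of _ c r _ c], use assms in auto)
  also have "\<dots> = (\<Sum>j<c. \<Sum>i<r. of_real ((cmod (X $$ (i,j)))\<^sup>2))"
    by (simp add: complex_norm_square mult.commute del: of_real_power)
  finally show ?thesis by simp
qed

lemma mtrace_adj_self_Re:
  assumes "X \<in> carrier_mat r c"
  shows "Im (mtrace (adj X * X)) = 0" "Re (mtrace (adj X * X)) \<ge> 0"
  using mtrace_adj_self[OF assms] by (auto intro!: sum_nonneg)

lemma mtrace_adj_self_zero:
  assumes "X \<in> carrier_mat r c" "mtrace (adj X * X) = 0"
  shows "X = 0\<^sub>m r c"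
proof (rule eq_matI)
  have "complex_of_real (\<Sum>j<c. \<Sum>i<r. (cmod (X $$ (i,j)))\<^sup>2) = 0"
    using mtrace_adj_self[OF assms(1)] assms(2) by metis
  then have "(\<Sum>j<c. \<Sum>i<r. (cmod (X $$ (i,j)))\<^sup>2) = 0" by (simp only: of_real_eq_0_iff)
  then have "\<forall>j\<in>{..<c}. (\<Sum>i<r. (cmod (X $$ (i,j)))\<^sup>2) = 0"
    by (subst (asm) sum_nonneg_eq_0_iff) (auto intro!: sum_nonneg)
  then have "\<forall>j<c. \<forall>i<r. (cmod (X $$ (i,j)))\<^sup>2 = 0"
    by (auto simp: sum_nonneg_eq_0_iff)
  then show "\<And>i j. i < dim_row (0\<^sub>m r c) \<Longrightarrow> j < dim_col (0\<^sub>m r c) \<Longrightarrow> X $$ (i, j) = 0\<^sub>m r c $$ (i, j)"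
    by auto
qed (use assms in auto)

lemma one_smult_mat'[simp]: "(1::complex) \<cdot>\<^sub>m X = X"
  by (rule eq_matI) auto

lemma mult_scalar_right[simp]: "dim_col X = d \<Longrightarrow> X * (s \<cdot>\<^sub>m 1\<^sub>m d) = s \<cdot>\<^sub>m (X :: complex mat)"
  by (rule eq_matI) (auto simp: if_distrib cong: if_cong)
lemma mult_scalar_left[simp]: "dim_row X = d \<Longrightarrow> (s \<cdot>\<^sub>m 1\<^sub>m d) * X = s \<cdot>\<^sub>m (X :: complex mat)"
  by (rule eq_matI) (auto simp: if_distrib cong: if_cong)

lemma smult_smult_mat': "(a::complex) \<cdot>\<^sub>m (b \<cdot>\<^sub>m X) = (a * b) \<cdot>\<^sub>m X"
  by (rule eq_matI) auto
lemma zero_smult_mat'[simp]: "(0::complex) \<cdot>\<^sub>m X = 0\<^sub>m (dim_row X) (dim_col X)"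
  by (rule eq_matI) auto

lemma mult_carrier_sq[simp,intro]: "A \<in> carrier_mat d d \<Longrightarrow> B \<in> carrier_mat d d \<Longrightarrow> A * B \<in> carrier_mat d d"
  by (rule mult_carrier_mat)

lemma neg_eq_smult: "- (Z :: complex mat) = (-1) \<cdot>\<^sub>m Z"
  by (rule eq_matI) auto

lemma cmod_exp_i[simp]: "cmod (exp (\<i> * of_real t)) = 1"
  by (metis cis_conv_exp norm_cis)

lemma exp_Arg: "cmod z = 1 \<Longrightarrow> exp (\<i> * of_real (Arg z)) = z"
proof -
  assume z: "cmod z = 1"
  then have "z \<noteq> 0" by auto
  then have "cis (Arg z) = sgn z" by (rule cis_Arg)
  then show ?thesis using z by (simp add: cis_conv_exp sgn_eq)
qed

lemma nonzero_mat_entry: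
  fixes W :: "complex mat"
  assumes "W \<in> carrier_mat d d" "W \<noteq> 0\<^sub>m d d"
  shows "\<exists>a b. a < d \<and> b < d \<and> W $$ (a,b) \<noteq> 0"
  using assms by (metis carrier_matD(1,2) eq_matI index_zero_mat(1,2,3))

lemma unitaryD: assumes "unitary_mat d U"
  shows "U \<in> carrier_mat d d" "adj U * U = 1\<^sub>m d" "U * adj U = 1\<^sub>m d"
  using assms by (auto simp: unitary_mat_def)

lemma unitary_cancel:
  assumes "unitary_mat d U" "X \<in> carrier_mat d c"
  shows "U * (adj U * X) = X" "adj U * (U * X) = X"
proof -
  note U = unitaryD[OF assms(1)]
  have "U * (adj U * X) = (U * adj U) * X" using U(1) assms(2) by (simp add: assoc_mult_mat[of _ d d _ d _ c])
  also have "\<dots> = X" using U(3) assms(2) by simp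
  finally show "U * (adj U * X) = X" .
  have "adj U * (U * X) = (adj U * U) * X" using U(1) assms(2) by (simp add: assoc_mult_mat[of _ d d _ d _ c])
  also have "\<dots> = X" using U(2) assms(2) by simp
  finally show "adj U * (U * X) = X" .
qed

lemma unitary_adj_mult:
  assumes "unitary_mat d V" "unitary_mat d U"
  shows "unitary_mat d (adj V * U)"
proof -
  note V = unitaryD[OF assms(1)] and U = unitaryD[OF assms(2)]
  have a: "adj (adj V * U) = adj U * V" using V U by (simp add: adj_mult[of _ d d _ d])
  have "adj U * V * (adj V * U) = adj U * (V * (adj V * U))"
    using V U by (simp add: assoc_mult_mat[of _ d d _ d _ d])
  also have "\<dots> = 1\<^sub>m d" using unitary_cancel[OF assms(1) U(1)] U by simp
  finally have 1: "adj U * V * (adj V * U) = 1\<^sub>m d" .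
  have "adj V * U * (adj U * V) = adj V * (U * (adj U * V))"
    using V U by (simp add: assoc_mult_mat[of _ d d _ d _ d])
  also have "\<dots> = 1\<^sub>m d" using unitary_cancel[OF assms(2) V(1)] V by simp
  finally have 2: "adj V * U * (adj U * V) = 1\<^sub>m d" .
  show ?thesis unfolding unitary_mat_def a using V U 1 2 by simp
qed

lemma mtrace_unitary_conj:
  assumes V: "unitary_mat d V" and X: "X \<in> carrier_mat d d"
  shows "mtrace (adj V * X * V) = mtrace X"
proof -
  note Vd = unitaryD[OF V]
  have "mtrace (adj V * X * V) = mtrace (adj V * (X * V))"
    using Vd X by (simp add: assoc_mult_mat[of _ d d _ d _ d])
  also have "\<dots> = mtrace ((X * V) * adj V)" using Vd X by (intro mtrace_mult_comm[of _ d d]) auto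
  also have "(X * V) * adj V = X" using Vd X by (simp add: assoc_mult_mat[of _ d d _ d _ d])
  finally show ?thesis .
qed

lemma det_0_right_annihilator:
  fixes K :: "complex mat"
  assumes K: "K \<in> carrier_mat d d" and det: "det K = 0"
  obtains X where "X \<in> carrier_mat d d" "X \<noteq> 0\<^sub>m d d" "K * X = 0\<^sub>m d d"
proof -
  obtain v where v: "v \<in> carrier_vec d" "v \<noteq> 0\<^sub>v d" "K *\<^sub>v v = 0\<^sub>v d"
    using det_0_iff_vec_prod_zero[OF K] det by auto
  obtain j where j: "j < d" "v $ j \<noteq> 0" using v(1,2) by (metis carrier_vecD eq_vecI index_zero_vec(1,2))
  define X where "X = mat d d (\<lambda>(i,k). if k = 0 then v $ i else (0::complex))"
  show ?thesis
  proof
    show "X \<in> carrier_mat d d" by (simp add: X_def)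
    show "X \<noteq> 0\<^sub>m d d"
    proof
      assume "X = 0\<^sub>m d d"
      then have "X $$ (j,0) = 0" using j by simp
      then show False using j by (simp add: X_def)
    qed
    show "K * X = 0\<^sub>m d d"
    proof (rule eq_matI)
      fix x k assume "x < dim_row (0\<^sub>m d d :: complex mat)" "k < dim_col (0\<^sub>m d d :: complex mat)"
      then have xk: "x < d" "k < d" by auto
      have "(K *\<^sub>v v) $ x = (\<Sum>t<d. K $$ (x,t) * v $ t)"
        using xk v(1) K by (simp add: scalar_prod_def lessThan_atLeast0)
      then have "(\<Sum>t<d. K $$ (x,t) * v $ t) = 0" using v(3) xk by simp
      then show "(K * X) $$ (x,k) = 0\<^sub>m d d $$ (x,k)"
        using xk K by (cases "k = 0") (simp_all add: X_def scalar_prod_def lessThan_atLeast0)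
    qed (use K in \<open>auto simp: X_def\<close>)
  qed
qed

lemma det_0_left_annihilator:
  fixes T :: "complex mat"
  assumes T: "T \<in> carrier_mat d d" and det: "det T = 0"
  obtains R where "R \<in> carrier_mat d d" "R \<noteq> 0\<^sub>m d d" "R * T = 0\<^sub>m d d"
proof -
  have "det (transpose_mat T) = 0" using det det_transpose[OF T] by simp
  then obtain X where X: "X \<in> carrier_mat d d" "X \<noteq> 0\<^sub>m d d" "transpose_mat T * X = 0\<^sub>m d d"
    using det_0_right_annihilator[of "transpose_mat T" d] T by auto
  have zero: "transpose_mat (0\<^sub>m d d :: complex mat) = 0\<^sub>m d d" by (rule eq_matI) auto
  show ?thesis
  proof
    show "transpose_mat X \<in> carrier_mat d d" using X by simp
    show "transpose_mat X \<noteq> 0\<^sub>m d d" using X(2) zero by (metis transpose_transpose)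
    have "transpose_mat (transpose_mat T * X) = transpose_mat X * T"
      using transpose_mult[of "transpose_mat T" d d X d] X(1) T by (metis transpose_carrier_mat transpose_transpose)
    then show "transpose_mat X * T = 0\<^sub>m d d" using X(3) zero by metis
  qed
qed

section \<open>Finite sums of matrices and matrix units\<close>

definition msum :: "nat \<Rightarrow> ('b \<Rightarrow> complex mat) \<Rightarrow> 'b set \<Rightarrow> complex mat" where
  "msum d F I = mat d d (\<lambda>(r,s). \<Sum>i\<in>I. F i $$ (r,s))"

lemma msum_carrier[simp]: "msum d F I \<in> carrier_mat d d" by (simp add: msum_def)
lemma msum_dims[simp]: "dim_row (msum d F I) = d" "dim_col (msum d F I) = d" by (simp_all add: msum_def)
lemma msum_index[simp]: "r < d \<Longrightarrow> s < d \<Longrightarrow> msum d F I $$ (r,s) = (\<Sum>i\<in>I. F i $$ (r,s))"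
  by (simp add: msum_def)

lemma mult_msum:
  assumes "X \<in> carrier_mat d d" "\<forall>i\<in>I. F i \<in> carrier_mat d d"
  shows "X * msum d F I = msum d (\<lambda>i. X * F i) I"
proof (rule eq_matI)
  fix r s assume rs: "r < dim_row (msum d (\<lambda>i. X * F i) I)" "s < dim_col (msum d (\<lambda>i. X * F i) I)"
  then have rs: "r < d" "s < d" by auto
  have "(\<Sum>i\<in>I. (X * F i) $$ (r,s)) = (\<Sum>i\<in>I. \<Sum>t<d. X $$ (r,t) * F i $$ (t,s))"
    using assms rs by (intro sum.cong) auto
  also have "\<dots> = (\<Sum>t<d. \<Sum>i\<in>I. X $$ (r,t) * F i $$ (t,s))" by (rule sum.swap)
  finally show "(X * msum d F I) $$ (r, s) = msum d (\<lambda>i. X * F i) I $$ (r, s)"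
    using assms rs by (simp add: sum_distrib_left)
qed (use assms in auto)

lemma msum_mult:
  assumes "Y \<in> carrier_mat d d" "\<forall>i\<in>I. F i \<in> carrier_mat d d"
  shows "msum d F I * Y = msum d (\<lambda>i. F i * Y) I"
proof (rule eq_matI)
  fix r s assume rs: "r < dim_row (msum d (\<lambda>i. F i * Y) I)" "s < dim_col (msum d (\<lambda>i. F i * Y) I)"
  then have rs: "r < d" "s < d" by auto
  have "(\<Sum>i\<in>I. (F i * Y) $$ (r,s)) = (\<Sum>i\<in>I. \<Sum>t<d. F i $$ (r,t) * Y $$ (t,s))"
    using assms rs by (intro sum.cong) auto
  also have "\<dots> = (\<Sum>t<d. \<Sum>i\<in>I. F i $$ (r,t) * Y $$ (t,s))" by (rule sum.swap)
  finally show "(msum d F I * Y) $$ (r, s) = msum d (\<lambda>i. F i * Y) I $$ (r, s)"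
    using assms rs by (simp add: sum_distrib_right)
qed (use assms in auto)

lemma mtrace_msum: "\<forall>i\<in>I. F i \<in> carrier_mat d d \<Longrightarrow> mtrace (msum d F I) = (\<Sum>i\<in>I. mtrace (F i))"
  unfolding mtrace_def by (simp, subst sum.swap, intro sum.cong, auto)

lemma msum_cong: "(\<And>i. i \<in> I \<Longrightarrow> F i = G i) \<Longrightarrow> msum d F I = msum d G I"
  by (simp add: msum_def)

lemma msum_smult:
  assumes "\<forall>i\<in>I. F i \<in> carrier_mat d d"
  shows "a \<cdot>\<^sub>m msum d F I = msum d (\<lambda>i. a \<cdot>\<^sub>m F i) I"
  by (rule eq_matI) (use assms in \<open>auto simp: sum_distrib_left intro!: sum.cong\<close>)

lemma msum_zero: "(\<And>i. i \<in> I \<Longrightarrow> F i = 0\<^sub>m d d) \<Longrightarrow> msum d F I = 0\<^sub>m d d"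
  by (rule eq_matI) auto

lemma msum_minus:
  assumes "\<forall>i\<in>I. G i \<in> carrier_mat d d"
  shows "msum d F I - msum d G I = msum d (\<lambda>i. F i - G i) I"
proof (rule eq_matI)
  fix r s assume "r < dim_row (msum d (\<lambda>i. F i - G i) I)" "s < dim_col (msum d (\<lambda>i. F i - G i) I)"
  then have rs: "r < d" "s < d" by auto
  have "(\<Sum>i\<in>I. (F i - G i) $$ (r,s)) = (\<Sum>i\<in>I. F i $$ (r,s) - G i $$ (r,s))"
    using assms rs by (intro sum.cong) auto
  then show "(msum d F I - msum d G I) $$ (r, s) = msum d (\<lambda>i. F i - G i) I $$ (r, s)"
    using rs by (simp add: sum_subtractf)
qed auto

definition emat :: "nat \<Rightarrow> nat \<Rightarrow> nat \<Rightarrow> complex mat" where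
  "emat d j k = mat d d (\<lambda>(r,s). if r = j \<and> s = k then 1 else 0)"

lemma emat_carrier[simp]: "emat d j k \<in> carrier_mat d d" by (simp add: emat_def)
lemma emat_dims[simp]: "dim_row (emat d j k) = d" "dim_col (emat d j k) = d" by (simp_all add: emat_def)
lemma emat_index[simp]: "r < d \<Longrightarrow> s < d \<Longrightarrow> emat d j k $$ (r,s) = (if r = j \<and> s = k then 1 else 0)"
  by (simp add: emat_def)

lemma mtrace_mult_emat:
  assumes "Y \<in> carrier_mat d d" "i < d" "j < d"
  shows "mtrace (Y * emat d j i) = Y $$ (i,j)"
proof -
  have "mtrace (Y * emat d j i) = (\<Sum>r<d. \<Sum>t<d. Y $$ (r,t) * (if t = j \<and> r = i then 1 else 0))"
    using assms by (simp add: mtrace_def)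
  also have "\<dots> = (\<Sum>r<d. if r = i then Y $$ (r,j) else 0)"
  proof (rule sum.cong)
    fix r assume "r \<in> {..<d}"
    have "(\<Sum>t<d. Y $$ (r,t) * (if t = j \<and> r = i then 1 else 0)) = (\<Sum>t<d. if t = j then (if r = i then Y $$ (r,t) else 0) else 0)"
      by (intro sum.cong) auto
    also have "\<dots> = (if r = i then Y $$ (r,j) else 0)" using assms by simp
    finally show "(\<Sum>t<d. Y $$ (r,t) * (if t = j \<and> r = i then 1 else 0)) = (if r = i then Y $$ (r,j) else 0)" .
  qed simp
  also have "\<dots> = Y $$ (i,j)" using assms by simp
  finally show ?thesis .
qed

lemma trace_pairing_nondegenerate:
  assumes "Y \<in> carrier_mat d d" "\<And>M. M \<in> carrier_mat d d \<Longrightarrow> mtrace (Y * M) = 0"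
  shows "Y = 0\<^sub>m d d"
proof (rule eq_matI)
  fix i j assume "i < dim_row (0\<^sub>m d d :: complex mat)" "j < dim_col (0\<^sub>m d d :: complex mat)"
  then show "Y $$ (i,j) = 0\<^sub>m d d $$ (i,j)"
    using mtrace_mult_emat[OF assms(1), of i j] assms(2)[of "emat d j i"] by simp
qed (use assms in auto)

lemma sandwich_eq_0:
  fixes X Y :: "complex mat"
  assumes "X \<in> carrier_mat d d" "Y \<in> carrier_mat d d" "X \<noteq> 0\<^sub>m d d"
    and "\<And>M. M \<in> carrier_mat d d \<Longrightarrow> X * M * Y = 0\<^sub>m d d"
  shows "Y = 0\<^sub>m d d"
proof -
  obtain a b where ab: "a < d" "b < d" "X $$ (a,b) \<noteq> 0"
    using assms(1,3) by (metis carrier_matD(1,2) eq_matI index_zero_mat(1,2,3))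
  show ?thesis
  proof (rule eq_matI)
    fix j k assume jk: "j < dim_row (0\<^sub>m d d :: complex mat)" "k < dim_col (0\<^sub>m d d :: complex mat)"
    have "(X * emat d b j * Y) $$ (a,k) = 0" using assms(4)[of "emat d b j"] ab jk by simp
    moreover have "(X * emat d b j * Y) $$ (a,k) = (\<Sum>t<d. (\<Sum>u<d. X $$ (a,u) * (if u = b \<and> t = j then 1 else 0)) * Y $$ (t,k))"
      using assms ab jk by simp
    moreover have "\<dots> = X $$ (a,b) * Y $$ (j,k)"
    proof -
      have "\<And>t. t < d \<Longrightarrow> (\<Sum>u<d. X $$ (a,u) * (if u = b \<and> t = j then 1 else 0)) = (if t = j then X $$ (a,b) else 0)"
        using ab by (auto simp: if_distrib cong: if_cong)
      then have "(\<Sum>t<d. (\<Sum>u<d. X $$ (a,u) * (if u = b \<and> t = j then 1 else 0)) * Y $$ (t,k))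
          = (\<Sum>t<d. (if t = j then X $$ (a,b) * Y $$ (t,k) else 0))"
        by (intro sum.cong) auto
      also have "\<dots> = X $$ (a,b) * Y $$ (j,k)" using jk by simp
      finally show ?thesis .
    qed
    ultimately show "Y $$ (j,k) = 0\<^sub>m d d $$ (j,k)" using ab jk by simp
  qed (use assms in auto)
qed

lemma mult_emat_index:
  assumes "X \<in> carrier_mat d d" "a < d" "b < d" "j < d" "k < d"
  shows "(X * emat d j k) $$ (a,b) = (if b = k then X $$ (a,j) else 0)"
proof -
  have "(X * emat d j k) $$ (a,b) = (\<Sum>t<d. X $$ (a,t) * (if t = j \<and> b = k then 1 else 0))"
    using assms by simp
  also have "\<dots> = (\<Sum>t<d. if t = j then (if b = k then X $$ (a,t) else 0) else 0)"
    by (intro sum.cong) auto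
  also have "\<dots> = (if b = k then X $$ (a,j) else 0)" using assms by simp
  finally show ?thesis .
qed

lemma emat_mult_index:
  assumes "X \<in> carrier_mat d d" "a < d" "b < d" "j < d" "k < d"
  shows "(emat d j k * X) $$ (a,b) = (if a = j then X $$ (k,b) else 0)"
proof -
  have "(emat d j k * X) $$ (a,b) = (\<Sum>t<d. (if a = j \<and> t = k then 1 else 0) * X $$ (t,b))"
    using assms by simp
  also have "\<dots> = (\<Sum>t<d. if t = k then (if a = j then X $$ (t,b) else 0) else 0)"
    by (intro sum.cong) auto
  also have "\<dots> = (if a = j then X $$ (k,b) else 0)" using assms by simp
  finally show ?thesis .
qed

lemma emat_mult_emat: assumes "i < d" "j < d" "k < d" shows "emat d i j * emat d j k = emat d i k"
proof (rule eq_matI)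
  fix a b assume "a < dim_row (emat d i k)" "b < dim_col (emat d i k)"
  then have ab: "a < d" "b < d" by auto
  show "(emat d i j * emat d j k) $$ (a,b) = emat d i k $$ (a,b)"
    using mult_emat_index[OF emat_carrier ab assms(2,3), of i j] ab assms by simp
qed auto

lemma one_emat: "0 < d \<Longrightarrow> 1\<^sub>m d = msum d (\<lambda>k. 1 \<cdot>\<^sub>m (emat d k 0 * emat d 0 k)) {..<d}"
proof (rule eq_matI)
  fix x y assume "x < dim_row (msum d (\<lambda>k. 1 \<cdot>\<^sub>m (emat d k 0 * emat d 0 k)) {..<d})"
      "y < dim_col (msum d (\<lambda>k. 1 \<cdot>\<^sub>m (emat d k 0 * emat d 0 k)) {..<d})"
  then have xy: "x < d" "y < d" by auto
  have "msum d (\<lambda>k. 1 \<cdot>\<^sub>m (emat d k 0 * emat d 0 k)) {..<d} $$ (x,y) = (\<Sum>k<d. (1 \<cdot>\<^sub>m (emat d k 0 * emat d 0 k)) $$ (x,y))"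
    by (rule msum_index[OF xy])
  also have "\<dots> = (\<Sum>k<d. if k = x then (if x = y then 1 else 0) else 0)"
    by (rule sum.cong) (use xy in \<open>auto simp: emat_mult_emat\<close>)
  also have "\<dots> = (if x = y then 1 else 0)" using xy by simp
  finally show "1\<^sub>m d $$ (x,y) = msum d (\<lambda>k. 1 \<cdot>\<^sub>m (emat d k 0 * emat d 0 k)) {..<d} $$ (x,y)"
    using xy by simp
qed auto

lemma commuting_mat_scalar:
  fixes Z :: "complex mat"
  assumes Z: "Z \<in> carrier_mat d d" and d: "0 < d"
    and comm: "\<And>M. M \<in> carrier_mat d d \<Longrightarrow> Z * M = M * Z"
  shows "Z = Z $$ (0,0) \<cdot>\<^sub>m 1\<^sub>m d"
proof (rule eq_matI)
  fix a b assume "a < dim_row (Z $$ (0,0) \<cdot>\<^sub>m 1\<^sub>m d)" "b < dim_col (Z $$ (0,0) \<cdot>\<^sub>m 1\<^sub>m d)"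
  then have ab: "a < d" "b < d" by auto
  have key: "\<And>j k a b. j < d \<Longrightarrow> k < d \<Longrightarrow> a < d \<Longrightarrow> b < d \<Longrightarrow>
     (if b = k then Z $$ (a,j) else 0) = (if a = j then Z $$ (k,b) else 0)"
  proof -
    fix j k a b assume jkab: "j < d" "k < d" "a < d" "b < d"
    have "Z * emat d j k = emat d j k * Z" by (rule comm) simp
    then have "(Z * emat d j k) $$ (a,b) = (emat d j k * Z) $$ (a,b)" by simp
    then show "(if b = k then Z $$ (a,j) else 0) = (if a = j then Z $$ (k,b) else 0)"
      using mult_emat_index[OF Z jkab(3,4,1,2)] emat_mult_index[OF Z jkab(3,4,1,2)] by simp
  qed
  show "Z $$ (a,b) = (Z $$ (0,0) \<cdot>\<^sub>m 1\<^sub>m d) $$ (a,b)"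
  proof (cases "a = b")
    case True
    have "Z $$ (b,b) = Z $$ (0,0)" using key[of b 0 b 0] ab d by simp
    then show ?thesis using True ab by simp
  next
    case False
    have "Z $$ (a,b) = 0" using key[of b b a b] ab False by simp
    then show ?thesis using False ab by simp
  qed
qed (use Z in auto)

section \<open>Products along words\<close>

lemma wprod_Nil[simp]: "wprod d A [] = 1\<^sub>m d" by (simp add: wprod_def)
lemma wprod_Cons[simp]: "wprod d A (i # w) = A i * wprod d A w" by (simp add: wprod_def)

lemma wprod_carrier: "(\<forall>i\<in>set w. A i \<in> carrier_mat d d) \<Longrightarrow> wprod d A w \<in> carrier_mat d d"
  by (induction w) auto

lemma wprod_append:
  assumes "\<forall>i\<in>set w. A i \<in> carrier_mat d d" "\<forall>i\<in>set v. A i \<in> carrier_mat d d"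
  shows "wprod d A (w @ v) = wprod d A w * wprod d A v"
  using assms
proof (induction w)
  case Nil
  then show ?case using wprod_carrier[of v A d] by simp
next
  case (Cons i w)
  then show ?case using wprod_carrier[of v A d] wprod_carrier[of w A d]
    by (simp add: assoc_mult_mat[of _ d d _ d _ d])
qed

lemma words_finite[simp]: "finite (words N L)"
proof -
  have "words N L \<subseteq> {w. set w \<subseteq> {1..N} \<and> length w = L}" by (auto simp: words_def)
  thus ?thesis using finite_lists_length_eq[of "{1..N}" L] finite_subset by blast
qed

lemma sum_words_add:
  "(\<Sum>u\<in>words N (m+k). f u) = (\<Sum>w\<in>words N m. \<Sum>v\<in>words N k. f (w @ v))"
proof -
  have bij: "bij_betw (\<lambda>(w,v). w @ v) (words N m \<times> words N k) (words N (m+k))"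
  proof (rule bij_betwI')
    fix x y assume "x \<in> words N m \<times> words N k" "y \<in> words N m \<times> words N k"
    then show "((case x of (w, v) \<Rightarrow> w @ v) = (case y of (w, v) \<Rightarrow> w @ v)) = (x = y)"
      by (cases x; cases y) (auto simp: words_def)
  next
    fix x assume "x \<in> words N m \<times> words N k"
    then show "(case x of (w, v) \<Rightarrow> w @ v) \<in> words N (m + k)" by (auto simp: words_def)
  next
    fix u assume u: "u \<in> words N (m + k)"
    show "\<exists>x\<in>words N m \<times> words N k. u = (case x of (w, v) \<Rightarrow> w @ v)"
      using u by (intro bexI[of _ "(take m u, drop m u)"])
        (auto simp: words_def dest: in_set_takeD in_set_dropD)
  qed
  have "(\<Sum>u\<in>words N (m+k). f u) = (\<Sum>x\<in>words N m \<times> words N k. f (case x of (w, v) \<Rightarrow> w @ v))"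
    using sum.reindex_bij_betw[OF bij, of f] by simp
  also have "\<dots> = (\<Sum>w\<in>words N m. \<Sum>v\<in>words N k. f (w @ v))"
    by (simp add: sum.cartesian_product split_def)
  finally show ?thesis .
qed

definition word_comb :: "nat \<Rightarrow> nat \<Rightarrow> (nat \<Rightarrow> complex mat) \<Rightarrow> nat \<Rightarrow> (nat list \<Rightarrow> complex) \<Rightarrow> complex mat" where
  "word_comb d N A m a = msum d (\<lambda>w. a w \<cdot>\<^sub>m wprod d A w) (words N m)"

definition words_span :: "nat \<Rightarrow> nat \<Rightarrow> (nat \<Rightarrow> complex mat) \<Rightarrow> nat \<Rightarrow> bool" where
  "words_span d N A m \<longleftrightarrow> (\<forall>M\<in>carrier_mat d d. \<exists>a. M = word_comb d N A m a)"

definition square_family :: "nat \<Rightarrow> nat \<Rightarrow> (nat \<Rightarrow> complex mat) \<Rightarrow> bool" where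
  "square_family d N A \<longleftrightarrow> (\<forall>i\<in>{1..N}. A i \<in> carrier_mat d d)"

lemma square_family_wprod: "square_family d N A \<Longrightarrow> w \<in> words N m \<Longrightarrow> wprod d A w \<in> carrier_mat d d"
  by (rule wprod_carrier) (auto simp: square_family_def words_def)

lemma square_family_wprod_set: "square_family d N A \<Longrightarrow> set w \<subseteq> {1..N} \<Longrightarrow> wprod d A w \<in> carrier_mat d d"
  by (rule wprod_carrier) (auto simp: square_family_def)

lemma word_comb_carrier[simp]: "word_comb d N A m a \<in> carrier_mat d d"
  by (simp add: word_comb_def)
lemma word_comb_dims[simp]: "dim_row (word_comb d N A m a) = d" "dim_col (word_comb d N A m a) = d"
  by (simp_all add: word_comb_def)

lemma word_comb_index:
  assumes "square_family d N A" "r < d" "s < d"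
  shows "word_comb d N A m a $$ (r,s) = (\<Sum>w\<in>words N m. a w * wprod d A w $$ (r,s))"
  unfolding word_comb_def msum_index[OF assms(2,3)]
proof (rule sum.cong)
  fix w assume "w \<in> words N m"
  then have "wprod d A w \<in> carrier_mat d d" using square_family_wprod[OF assms(1)] by auto
  then show "(a w \<cdot>\<^sub>m wprod d A w) $$ (r, s) = a w * wprod d A w $$ (r, s)" using assms by auto
qed simp

lemma word_comb_mult:
  assumes A: "square_family d N A"
  shows "word_comb d N A m a * word_comb d N A k b = word_comb d N A (m+k) (\<lambda>u. a (take m u) * b (drop m u))"
proof (rule eq_matI)
  fix r s assume "r < dim_row (word_comb d N A (m+k) (\<lambda>u. a (take m u) * b (drop m u)))"
    "s < dim_col (word_comb d N A (m+k) (\<lambda>u. a (take m u) * b (drop m u)))"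
  then have rs: "r < d" "s < d" by auto
  have "word_comb d N A (m+k) (\<lambda>u. a (take m u) * b (drop m u)) $$ (r,s)
     = (\<Sum>w\<in>words N m. \<Sum>v\<in>words N k. a (take m (w@v)) * b (drop m (w@v)) * wprod d A (w@v) $$ (r,s))"
    unfolding word_comb_index[OF A rs] by (rule sum_words_add)
  also have "\<dots> = (\<Sum>w\<in>words N m. \<Sum>v\<in>words N k. \<Sum>t<d. (a w * wprod d A w $$ (r,t)) * (b v * wprod d A v $$ (t,s)))"
  proof (intro sum.cong refl)
    fix w v assume w: "w \<in> words N m" and v: "v \<in> words N k"
    have wc: "wprod d A w \<in> carrier_mat d d" and vc: "wprod d A v \<in> carrier_mat d d"
      using square_family_wprod[OF A] w v by auto
    have "wprod d A (w@v) = wprod d A w * wprod d A v"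
      using w v A by (intro wprod_append) (auto simp: square_family_def words_def)
    then show "a (take m (w@v)) * b (drop m (w@v)) * wprod d A (w@v) $$ (r,s)
       = (\<Sum>t<d. (a w * wprod d A w $$ (r,t)) * (b v * wprod d A v $$ (t,s)))"
      using w wc vc rs by (simp add: words_def sum_distrib_left algebra_simps del: append_eq_conv_conj)
  qed
  also have "\<dots> = (\<Sum>t<d. (\<Sum>w\<in>words N m. a w * wprod d A w $$ (r,t)) * (\<Sum>v\<in>words N k. b v * wprod d A v $$ (t,s)))"
  proof -
    have "(\<Sum>t<d. (\<Sum>w\<in>words N m. a w * wprod d A w $$ (r,t)) * (\<Sum>v\<in>words N k. b v * wprod d A v $$ (t,s)))
        = (\<Sum>t<d. \<Sum>w\<in>words N m. \<Sum>v\<in>words N k. (a w * wprod d A w $$ (r,t)) * (b v * wprod d A v $$ (t,s)))"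
      by (simp only: sum_product)
    also have "\<dots> = (\<Sum>w\<in>words N m. \<Sum>t<d. \<Sum>v\<in>words N k. (a w * wprod d A w $$ (r,t)) * (b v * wprod d A v $$ (t,s)))"
      by (rule sum.swap)
    also have "\<dots> = (\<Sum>w\<in>words N m. \<Sum>v\<in>words N k. \<Sum>t<d. (a w * wprod d A w $$ (r,t)) * (b v * wprod d A v $$ (t,s)))"
      by (rule sum.cong, simp, rule sum.swap)
    finally show ?thesis by simp
  qed
  also have "\<dots> = (word_comb d N A m a * word_comb d N A k b) $$ (r,s)"
    using rs by (simp add: word_comb_index[OF A])
  finally show "(word_comb d N A m a * word_comb d N A k b) $$ (r, s) = word_comb d N A (m+k) (\<lambda>u. a (take m u) * b (drop m u)) $$ (r, s)"
    by simp
qed auto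

lemma word_comb_lin:
  assumes A: "square_family d N A" and J: "finite J"
  shows "msum d (\<lambda>j. s j \<cdot>\<^sub>m word_comb d N A m (a j)) J = word_comb d N A m (\<lambda>w. \<Sum>j\<in>J. s j * a j w)"
proof (rule eq_matI)
  fix r c assume "r < dim_row (word_comb d N A m (\<lambda>w. \<Sum>j\<in>J. s j * a j w))" "c < dim_col (word_comb d N A m (\<lambda>w. \<Sum>j\<in>J. s j * a j w))"
  then have rc: "r < d" "c < d" by auto
  show "msum d (\<lambda>j. s j \<cdot>\<^sub>m word_comb d N A m (a j)) J $$ (r, c) = word_comb d N A m (\<lambda>w. \<Sum>j\<in>J. s j * a j w) $$ (r, c)"
    using rc by (simp add: word_comb_index[OF A] sum_distrib_left sum_distrib_right sum.swap[of _ J] mult.assoc)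
qed auto

lemma word_comb_sub:
  assumes A: "square_family d N A"
  shows "word_comb d N A m a - word_comb d N A m b = word_comb d N A m (\<lambda>w. a w - b w)"
  by (rule eq_matI) (auto simp: word_comb_index[OF A] sum_subtractf algebra_simps)

lemma word_comb_eq_sub0:
  assumes A: "square_family d N A" and "word_comb d N A m a = word_comb d N A m b"
  shows "word_comb d N A m (\<lambda>w. a w - b w) = 0\<^sub>m d d"
proof -
  have "word_comb d N A m (\<lambda>w. a w - b w) = word_comb d N A m b - word_comb d N A m b"
    using word_comb_sub[OF A, of m a b] assms(2) by simp
  also have "\<dots> = 0\<^sub>m d d" by (rule eq_matI) auto
  finally show ?thesis .
qed

lemma word_comb_sub0_eq:
  assumes A: "square_family d N A" and "word_comb d N A m (\<lambda>w. a w - b w) = 0\<^sub>m d d"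
  shows "word_comb d N A m a = word_comb d N A m b"
proof (rule eq_matI)
  fix r s assume "r < dim_row (word_comb d N A m b)" "s < dim_col (word_comb d N A m b)"
  then have rs: "r < d" "s < d" by auto
  have "(word_comb d N A m a - word_comb d N A m b) $$ (r,s) = 0" using word_comb_sub[OF A, of m a b] assms(2) rs by simp
  then show "word_comb d N A m a $$ (r,s) = word_comb d N A m b $$ (r,s)" using rs by simp
qed auto

lemma mult_word_comb:
  assumes A: "square_family d N A" and X: "X \<in> carrier_mat d d"
  shows "X * word_comb d N A m a = msum d (\<lambda>w. a w \<cdot>\<^sub>m (X * wprod d A w)) (words N m)"
  unfolding word_comb_def using X square_family_wprod[OF A]
  by (subst mult_msum[of _ d]) (auto intro!: msum_cong mult_smult_distrib[of _ d d _ d])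

lemma word_comb_mult_right:
  assumes A: "square_family d N A" and X: "X \<in> carrier_mat d d"
  shows "word_comb d N A m a * X = msum d (\<lambda>w. a w \<cdot>\<^sub>m (wprod d A w * X)) (words N m)"
  unfolding word_comb_def using X square_family_wprod[OF A]
  by (subst msum_mult[of _ d]) (auto intro!: msum_cong mult_smult_assoc_mat[of _ d d _ d])

lemma mtrace_word_comb_left:
  assumes A: "square_family d N A" and X: "X \<in> carrier_mat d d"
  shows "mtrace (X * word_comb d N A m a) = (\<Sum>w\<in>words N m. a w * mtrace (X * wprod d A w))"
  using mult_word_comb[OF A X] square_family_wprod[OF A] X
  by (simp add: mtrace_msum) (auto intro!: sum.cong mtrace_smult[of _ d])

lemma word_comb_single:
  assumes A: "square_family d N A" and i: "i \<in> {1..N}"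
  shows "word_comb d N A 1 (\<lambda>w. if w = [i] then 1 else 0) = A i"
proof (rule eq_matI)
  have Ai: "A i \<in> carrier_mat d d" using A i by (auto simp: square_family_def)
  fix r s assume "r < dim_row (A i)" "s < dim_col (A i)"
  then have rs: "r < d" "s < d" using Ai by auto
  have "[i] \<in> words N 1" using i by (simp add: words_def)
  have "word_comb d N A 1 (\<lambda>w. if w = [i] then 1 else 0) $$ (r,s) = (\<Sum>w\<in>words N 1. if w = [i] then wprod d A w $$ (r,s) else 0)"
    unfolding word_comb_index[OF A rs] by (rule sum.cong) auto
  also have "\<dots> = wprod d A [i] $$ (r,s)" using \<open>[i] \<in> words N 1\<close> by simp
  finally have "word_comb d N A 1 (\<lambda>w. if w = [i] then 1 else 0) $$ (r,s) = wprod d A [i] $$ (r,s)" .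
  also have "\<dots> = A i $$ (r,s)" using Ai by simp
  finally show "word_comb d N A 1 (\<lambda>w. if w = [i] then 1 else 0) $$ (r,s) = A i $$ (r,s)" .
qed (use A i in \<open>auto simp: square_family_def\<close>)

lemma canonical_msum:
  "canonical_form N n A \<Longrightarrow> msum (2*n) (\<lambda>i. A i * adj (A i)) {1..N} = 1\<^sub>m (2*n)"
  by (simp add: canonical_form_def msum_def)

lemma injective_plus_words_span:
  assumes "injective_plus N n A" "square_family (2*n) N A"
  shows "\<exists>l. words_span (2*n) N A l"
proof -
  obtain l where l: "\<forall>M \<in> carrier_mat (2*n) (2*n). \<exists>c :: nat list \<Rightarrow> complex.
        M = mat (2*n) (2*n) (\<lambda>(r,s). \<Sum>w\<in>words N l. c w * wprod (2*n) A w $$ (r,s))"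
    using assms(1) unfolding injective_plus_def by blast
  have "mat (2*n) (2*n) (\<lambda>(r,s). \<Sum>w\<in>words N l. c w * wprod (2*n) A w $$ (r,s)) = word_comb (2*n) N A l c" for c
    by (rule eq_matI) (auto simp: word_comb_index[OF assms(2)])
  then show ?thesis using l unfolding words_span_def by metis
qed

lemma words_span_Suc:
  assumes A: "square_family d N A" and can: "msum d (\<lambda>i. A i * adj (A i)) {1..N} = 1\<^sub>m d"
    and sp: "words_span d N A l"
  shows "words_span d N A (Suc l)"
  unfolding words_span_def
proof
  fix M :: "complex mat" assume M: "M \<in> carrier_mat d d"
  have Ai: "\<And>i. i \<in> {1..N} \<Longrightarrow> A i \<in> carrier_mat d d" using A by (auto simp: square_family_def)
  have "\<forall>i\<in>{1..N}. \<exists>a. adj (A i) * M = word_comb d N A l a"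
    using sp M Ai unfolding words_span_def by (meson adj_carrier mult_carrier_mat)
  then obtain a where a: "\<And>i. i \<in> {1..N} \<Longrightarrow> adj (A i) * M = word_comb d N A l (a i)"
    by metis
  let ?\<delta> = "\<lambda>i w. if w = [i] then (1::complex) else 0"
  have "M = 1\<^sub>m d * M" using M by simp
  also have "\<dots> = msum d (\<lambda>i. A i * adj (A i) * M) {1..N}"
    using M Ai by (subst can[symmetric], subst msum_mult[of _ d]) (auto intro: mult_carrier_mat[of _ d d _ d])
  also have "\<dots> = msum d (\<lambda>i. 1 \<cdot>\<^sub>m word_comb d N A (1 + l) (\<lambda>u. ?\<delta> i (take 1 u) * a i (drop 1 u))) {1..N}"
  proof (rule msum_cong)
    fix i assume i: "i \<in> {1..N}"
    have "A i * adj (A i) * M = A i * (adj (A i) * M)"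
      using Ai[OF i] M by (simp add: assoc_mult_mat[of _ d d _ d _ d])
    also have "\<dots> = word_comb d N A 1 (?\<delta> i) * word_comb d N A l (a i)"
      using a[OF i] word_comb_single[OF A i] by simp
    also have "\<dots> = word_comb d N A (1 + l) (\<lambda>u. ?\<delta> i (take 1 u) * a i (drop 1 u))"
      by (rule word_comb_mult[OF A])
    finally show "A i * adj (A i) * M = 1 \<cdot>\<^sub>m word_comb d N A (1 + l) (\<lambda>u. ?\<delta> i (take 1 u) * a i (drop 1 u))"
      by simp
  qed
  also have "\<dots> = word_comb d N A (1 + l) (\<lambda>w. \<Sum>i\<in>{1..N}. 1 * (?\<delta> i (take 1 w) * a i (drop 1 w)))"
    by (rule word_comb_lin[OF A]) simp
  finally show "\<exists>c. M = word_comb d N A (Suc l) c" by auto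
qed

lemma words_span_mono:
  assumes A: "square_family d N A" and can: "msum d (\<lambda>i. A i * adj (A i)) {1..N} = 1\<^sub>m d"
    and sp: "words_span d N A l" and lm: "l \<le> m"
  shows "words_span d N A m"
  using lm
proof (induction m)
  case 0 then show ?case using sp by simp
next
  case (Suc m)
  then show ?case using words_span_Suc[OF A can] sp by (cases "l = Suc m") auto
qed

lemma mtrace_word_comb_sandwich:
  assumes A: "square_family d N A" and P: "P \<in> carrier_mat d d" and Y: "Y \<in> carrier_mat d d"
  shows "mtrace (P * (word_comb d N A m a * Y)) = (\<Sum>w\<in>words N m. a w * mtrace (P * (wprod d A w * Y)))"
proof -
  have W: "\<And>w. w \<in> words N m \<Longrightarrow> wprod d A w \<in> carrier_mat d d" using square_family_wprod[OF A] by auto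
  have "P * (word_comb d N A m a * Y) = msum d (\<lambda>w. P * (a w \<cdot>\<^sub>m (wprod d A w * Y))) (words N m)"
    using word_comb_mult_right[OF A Y] W Y P by (simp, subst mult_msum[of _ d]) (auto intro!: smult_carrier_mat mult_carrier_mat[of _ d d _ d])
  also have "\<dots> = msum d (\<lambda>w. a w \<cdot>\<^sub>m (P * (wprod d A w * Y))) (words N m)"
    using W Y P by (intro msum_cong) (auto intro!: mult_smult_distrib[of _ d d _ d])
  finally show ?thesis using W Y P by (simp add: mtrace_msum) (auto intro!: sum.cong mtrace_smult[of _ d])
qed

lemma twisted_commute_span:
  assumes B: "square_family d N B" and sp: "words_span d N B L" and X: "X \<in> carrier_mat d d"
    and tw: "\<And>i. i \<in> {1..N} \<Longrightarrow> B i * X = \<omega> \<cdot>\<^sub>m (X * B i)"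
    and M: "M \<in> carrier_mat d d"
  shows "M * X = (\<omega> ^ L) \<cdot>\<^sub>m (X * M)"
proof -
  have Bi: "\<And>i. i \<in> {1..N} \<Longrightarrow> B i \<in> carrier_mat d d" using B by (auto simp: square_family_def)
  have w: "wprod d B w * X = (\<omega> ^ length w) \<cdot>\<^sub>m (X * wprod d B w)" if "set w \<subseteq> {1..N}" for w
    using that
  proof (induction w)
    case Nil then show ?case using X by simp
  next
    case (Cons i w)
    have i: "i \<in> {1..N}" and ws: "set w \<subseteq> {1..N}" using Cons.prems by auto
    have W: "wprod d B w \<in> carrier_mat d d" using square_family_wprod_set[OF B ws] .
    have "wprod d B (i # w) * X = B i * (wprod d B w * X)"
      using Bi[OF i] W X by (simp add: assoc_mult_mat[of _ d d _ d _ d])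
    also have "\<dots> = (\<omega> ^ length w) \<cdot>\<^sub>m ((B i * X) * wprod d B w)"
      using Cons.IH[OF ws] Bi[OF i] W X by (simp add: mult_smult_distrib[of _ d d _ d] assoc_mult_mat[of _ d d _ d _ d])
    also have "\<dots> = (\<omega> ^ length (i # w)) \<cdot>\<^sub>m (X * wprod d B (i # w))"
      using tw[OF i] Bi[OF i] W X
      by (simp add: mult_smult_assoc_mat[of _ d d _ d] smult_smult_mat' assoc_mult_mat[of _ d d _ d _ d] mult.commute)
    finally show ?case .
  qed
  obtain b where b: "M = word_comb d N B L b" using sp M unfolding words_span_def by blast
  have B_wprod_carrier: "\<And>w. w \<in> words N L \<Longrightarrow> wprod d B w \<in> carrier_mat d d" using square_family_wprod[OF B] by auto
  have "M * X = msum d (\<lambda>w. b w \<cdot>\<^sub>m (wprod d B w * X)) (words N L)"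
    unfolding b by (rule word_comb_mult_right[OF B X])
  also have "\<dots> = msum d (\<lambda>w. (\<omega> ^ L) \<cdot>\<^sub>m (b w \<cdot>\<^sub>m (X * wprod d B w))) (words N L)"
  proof (rule msum_cong)
    fix v assume v: "v \<in> words N L"
    then have "set v \<subseteq> {1..N}" "length v = L" by (auto simp: words_def)
    then show "b v \<cdot>\<^sub>m (wprod d B v * X) = (\<omega> ^ L) \<cdot>\<^sub>m (b v \<cdot>\<^sub>m (X * wprod d B v))"
      using w by (simp add: smult_smult_mat' mult.commute)
  qed
  also have "\<dots> = (\<omega> ^ L) \<cdot>\<^sub>m msum d (\<lambda>w. b w \<cdot>\<^sub>m (X * wprod d B w)) (words N L)"
    using B_wprod_carrier X by (subst msum_smult) auto
  also have "msum d (\<lambda>w. b w \<cdot>\<^sub>m (X * wprod d B w)) (words N L) = X * M"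
    unfolding b by (rule mult_word_comb[OF B X, symmetric])
  finally show ?thesis .
qed

lemma twisted_commutant_scalar:
  assumes d: "0 < d" and A: "square_family d N A" and sp: "words_span d N A L" and L: "0 < L"
    and W: "W \<in> carrier_mat d d" and W0: "W \<noteq> 0\<^sub>m d d"
    and tw: "\<And>i. i \<in> {1..N} \<Longrightarrow> A i * W = \<omega> \<cdot>\<^sub>m (W * A i)"
  shows "\<omega> = 1" and "W = W $$ (0,0) \<cdot>\<^sub>m 1\<^sub>m d"
proof -
  have Ai: "\<And>i. i \<in> {1..N} \<Longrightarrow> A i \<in> carrier_mat d d" using A by (simp add: square_family_def)
  have comm: "M * W = (\<omega> ^ L) \<cdot>\<^sub>m (W * M)" if "M \<in> carrier_mat d d" for M
    by (rule twisted_commute_span[OF A sp W tw that])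
  obtain a b where ab: "a < d" "b < d" "W $$ (a,b) \<noteq> 0" using nonzero_mat_entry[OF W W0] by blast
  have "W = (\<omega> ^ L) \<cdot>\<^sub>m W" using comm[of "1\<^sub>m d"] W by simp
  then have "W $$ (a,b) = \<omega> ^ L * W $$ (a,b)" using ab W by (metis carrier_matD(1,2) index_smult_mat(1))
  then have om: "\<omega> ^ L = 1" using ab(3) by simp
  show Wsc: "W = W $$ (0,0) \<cdot>\<^sub>m 1\<^sub>m d"
    by (rule commuting_mat_scalar[OF W d]) (use comm om W in simp)
  define s where "s = W $$ (0,0)"
  have Ws: "W = s \<cdot>\<^sub>m 1\<^sub>m d" using Wsc unfolding s_def .
  have s0: "s \<noteq> 0"
  proof
    assume "s = 0"
    then have "W = 0\<^sub>m d d" using Ws by simp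
    then show False using W0 by simp
  qed
  show "\<omega> = 1"
  proof (rule ccontr)
    assume om1: "\<omega> \<noteq> 1"
    have Az: "A i = 0\<^sub>m d d" if i: "i \<in> {1..N}" for i
    proof -
      have "A i * W = s \<cdot>\<^sub>m A i" "W * A i = s \<cdot>\<^sub>m A i" using Ws Ai[OF i] by simp_all
      then have "s \<cdot>\<^sub>m A i = (\<omega> * s) \<cdot>\<^sub>m A i" using tw[OF i] by (simp add: smult_smult_mat')
      then have "\<And>x y. x < d \<Longrightarrow> y < d \<Longrightarrow> s * A i $$ (x,y) = \<omega> * s * A i $$ (x,y)"
        using Ai[OF i] by (metis carrier_matD(1,2) index_smult_mat(1))
      then have "\<And>x y. x < d \<Longrightarrow> y < d \<Longrightarrow> A i $$ (x,y) = 0" using s0 om1 by auto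
      then show ?thesis using Ai[OF i] by (intro eq_matI) auto
    qed
    txt \<open>Then every product of length \<open>L > 0\<close> vanishes, yet these products span.\<close>
    have Wz: "wprod d A w = 0\<^sub>m d d" if w: "w \<in> words N L" for w
    proof -
      obtain i w' where iw: "w = i # w'" using w L by (cases w) (auto simp: words_def)
      have i: "i \<in> {1..N}" and w's: "set w' \<subseteq> {1..N}" using w iw by (auto simp: words_def)
      show ?thesis using iw Az[OF i] square_family_wprod_set[OF A w's] by simp
    qed
    obtain c where c: "1\<^sub>m d = word_comb d N A L c"
      using bspec[OF sp[unfolded words_span_def], of "1\<^sub>m d"] by auto
    have "word_comb d N A L c = 0\<^sub>m d d"
      unfolding word_comb_def by (rule msum_zero) (simp only: Wz smult_zero_mat)
    then have "(1\<^sub>m d :: complex mat) $$ (0,0) = (0\<^sub>m d d :: complex mat) $$ (0,0)" using c by simp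
    then show False using d by simp
  qed
qed

section \<open>Positive fixed points of a channel\<close>

definition sesq_sum :: "nat \<Rightarrow> complex mat \<Rightarrow> complex mat \<Rightarrow> complex mat \<Rightarrow> complex" where
  "sesq_sum d X K Y = (\<Sum>k<d. \<Sum>i<d. \<Sum>j<d. cnj (X $$ (i,k)) * K $$ (i,j) * Y $$ (j,k))"

lemma sesq_sum_eq:
  assumes "X \<in> carrier_mat d d" "K \<in> carrier_mat d d" "Y \<in> carrier_mat d d"
  shows "mtrace (adj X * K * Y) = sesq_sum d X K Y"
proof -
  have "mtrace (adj X * K * Y) = (\<Sum>k<d. \<Sum>j<d. (\<Sum>i<d. cnj (X $$ (i,k)) * K $$ (i,j)) * Y $$ (j,k))"
    using assms by (simp add: mtrace_def)
  also have "\<dots> = (\<Sum>k<d. \<Sum>j<d. \<Sum>i<d. cnj (X $$ (i,k)) * K $$ (i,j) * Y $$ (j,k))"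
    by (simp add: sum_distrib_right)
  also have "\<dots> = sesq_sum d X K Y"
    unfolding sesq_sum_def by (rule sum.cong[OF refl], rule sum.swap)
  finally show ?thesis .
qed

lemma sesq_sum_expand:
  assumes "X \<in> carrier_mat d d" "Y \<in> carrier_mat d d"
  shows "sesq_sum d (X - t \<cdot>\<^sub>m Y) K (X - t \<cdot>\<^sub>m Y)
    = sesq_sum d X K X - t * sesq_sum d X K Y - cnj t * sesq_sum d Y K X + cnj t * t * sesq_sum d Y K Y"
proof -
  have "sesq_sum d (X - t \<cdot>\<^sub>m Y) K (X - t \<cdot>\<^sub>m Y) = (\<Sum>k<d. \<Sum>i<d. \<Sum>j<d.
      cnj (X $$ (i,k)) * K $$ (i,j) * X $$ (j,k) - t * (cnj (X $$ (i,k)) * K $$ (i,j) * Y $$ (j,k))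
      - cnj t * (cnj (Y $$ (i,k)) * K $$ (i,j) * X $$ (j,k)) + cnj t * t * (cnj (Y $$ (i,k)) * K $$ (i,j) * Y $$ (j,k)))"
    unfolding sesq_sum_def using assms by (intro sum.cong refl) (auto simp: algebra_simps)
  also have "\<dots> = sesq_sum d X K X - t * sesq_sum d X K Y - cnj t * sesq_sum d Y K X + cnj t * t * sesq_sum d Y K Y"
    unfolding sesq_sum_def by (simp add: sum.distrib sum_subtractf sum_distrib_left)
  finally show ?thesis .
qed

definition hermitian :: "nat \<Rightarrow> complex mat \<Rightarrow> bool" where
  "hermitian d K \<longleftrightarrow> K \<in> carrier_mat d d \<and> adj K = K"

definition psd :: "nat \<Rightarrow> complex mat \<Rightarrow> bool" where
  "psd d K \<longleftrightarrow> (\<forall>X\<in>carrier_mat d d. Re (mtrace (adj X * K * X)) \<ge> 0)"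

lemma hermitian_form_cnj:
  assumes "hermitian d K" "X \<in> carrier_mat d d" "Y \<in> carrier_mat d d"
  shows "cnj (mtrace (adj X * K * Y)) = mtrace (adj Y * K * X)"
proof -
  have K: "K \<in> carrier_mat d d" "adj K = K" using assms(1) by (auto simp: hermitian_def)
  have "cnj (mtrace (adj X * K * Y)) = mtrace (adj (adj X * K * Y))"
    using assms K by (intro cnj_mtrace) auto
  also have "adj (adj X * K * Y) = adj Y * adj (adj X * K)"
    using assms K by (intro adj_mult[of _ d d]) auto
  also have "adj (adj X * K) = adj K * X" using assms K by (subst adj_mult[of _ d d]) auto
  finally show ?thesis using K assms by (simp add: assoc_mult_mat[of _ d d _ d _ d])
qed

lemma hermitian_form_real:
  assumes "hermitian d K" "X \<in> carrier_mat d d"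
  shows "Im (mtrace (adj X * K * X)) = 0"
proof -
  have "cnj (mtrace (adj X * K * X)) = mtrace (adj X * K * X)" using hermitian_form_cnj[OF assms assms(2)] .
  then have "Im (cnj (mtrace (adj X * K * X))) = Im (mtrace (adj X * K * X))" by simp
  then show ?thesis by simp
qed

lemma cauchy_schwarz_psd:
  assumes H: "hermitian d K" and P: "psd d K" and X: "X \<in> carrier_mat d d" and Y: "Y \<in> carrier_mat d d"
  shows "(cmod (mtrace (adj X * K * Y)))\<^sup>2 \<le> Re (mtrace (adj X * K * X)) * Re (mtrace (adj Y * K * Y))"
proof -
  have K: "K \<in> carrier_mat d d" using H by (simp add: hermitian_def)
  define g where "g = mtrace (adj X * K * Y)"
  define a where "a = Re (mtrace (adj X * K * X))"
  define b where "b = Re (mtrace (adj Y * K * Y))"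
  have T_index: "a \<ge> 0" "b \<ge> 0" using P X Y unfolding psd_def a_def b_def by auto
  have gYX: "mtrace (adj Y * K * X) = cnj g" unfolding g_def using hermitian_form_cnj[OF H X Y] by simp
  have aX: "mtrace (adj X * K * X) = of_real a" using hermitian_form_real[OF H X] unfolding a_def by (simp add: complex_eq_iff)
  have bY: "mtrace (adj Y * K * Y) = of_real b" using hermitian_form_real[OF H Y] unfolding b_def by (simp add: complex_eq_iff)
  have main: "0 \<le> a - 2 * s * (cmod g)\<^sup>2 + s\<^sup>2 * (cmod g)\<^sup>2 * b" for s :: real
  proof -
    define t where "t = of_real s * cnj g"
    have W: "X - t \<cdot>\<^sub>m Y \<in> carrier_mat d d" using X Y by (intro minus_carrier_mat) auto
    have "0 \<le> Re (mtrace (adj (X - t \<cdot>\<^sub>m Y) * K * (X - t \<cdot>\<^sub>m Y)))" using P W unfolding psd_def by auto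
    also have "mtrace (adj (X - t \<cdot>\<^sub>m Y) * K * (X - t \<cdot>\<^sub>m Y)) = sesq_sum d X K X - t * sesq_sum d X K Y - cnj t * sesq_sum d Y K X + cnj t * t * sesq_sum d Y K Y"
      using sesq_sum_eq[OF W K W] sesq_sum_expand[OF X Y] by simp
    also have "\<dots> = of_real a - t * g - cnj t * cnj g + cnj t * t * of_real b"
      using sesq_sum_eq[OF X K X] sesq_sum_eq[OF X K Y] sesq_sum_eq[OF Y K X] sesq_sum_eq[OF Y K Y] aX bY gYX g_def by simp
    also have "Re \<dots> = a - 2 * s * (cmod g)\<^sup>2 + s\<^sup>2 * (cmod g)\<^sup>2 * b"
      unfolding t_def cmod_power2 by (simp add: power2_eq_square algebra_simps)
    finally show ?thesis .
  qed
  show ?thesis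
  proof (cases "b = 0")
    case True
    show ?thesis
    proof (cases "g = 0")
      case True then show ?thesis using T_index unfolding g_def a_def b_def by simp
    next
      case False
      then have gp: "(cmod g)\<^sup>2 > 0" by simp
      have "0 \<le> a - 2 * ((a + 1) / (2 * (cmod g)\<^sup>2)) * (cmod g)\<^sup>2"
        using main[of "(a + 1) / (2 * (cmod g)\<^sup>2)"] \<open>b = 0\<close> by simp
      also have "\<dots> = -1" using gp by (simp add: field_simps)
      finally show ?thesis by simp
    qed
  next
    case False
    then have bp: "b > 0" using T_index by simp
    have "0 \<le> a - 2 * (1/b) * (cmod g)\<^sup>2 + (1/b)\<^sup>2 * (cmod g)\<^sup>2 * b" by (rule main)
    also have "\<dots> = a - (cmod g)\<^sup>2 / b" using bp by (simp add: field_simps power2_eq_square)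
    finally have "(cmod g)\<^sup>2 \<le> a * b" using bp by (simp add: field_simps)
    then show ?thesis unfolding g_def a_def b_def .
  qed
qed

lemma psd_form_zero_imp_mult_zero:
  assumes H: "hermitian d K" and P: "psd d K" and X: "X \<in> carrier_mat d d"
    and z: "Re (mtrace (adj X * K * X)) = 0"
  shows "K * X = 0\<^sub>m d d"
proof -
  have K: "K \<in> carrier_mat d d" "adj K = K" using H by (auto simp: hermitian_def)
  have KX: "K * X \<in> carrier_mat d d" using K X by simp
  have e: "adj (K * X) * K * X = adj (K * X) * (K * X)"
    using K X by (simp add: assoc_mult_mat[of _ d d _ d _ d])
  have "(cmod (mtrace (adj (K * X) * K * X)))\<^sup>2 \<le> Re (mtrace (adj (K*X) * K * (K*X))) * Re (mtrace (adj X * K * X))"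
    by (rule cauchy_schwarz_psd[OF H P KX X])
  then have "(cmod (mtrace (adj (K * X) * (K * X))))\<^sup>2 \<le> 0" using z e by simp
  then have "mtrace (adj (K * X) * (K * X)) = 0" by simp
  then show ?thesis using mtrace_adj_self_zero[OF KX] by simp
qed

lemma form_bounded_by_norm:
  assumes M: "M \<in> carrier_mat d d"
  shows "\<exists>C>0. \<forall>Y\<in>carrier_mat d d. Re (mtrace (adj Y * M * Y)) \<le> C * Re (mtrace (adj Y * Y))"
proof -
  define S where "S = (\<Sum>i<d. \<Sum>j<d. cmod (M $$ (i,j)))"
  have S0: "S \<ge> 0" unfolding S_def by (intro sum_nonneg) auto
  have Mij: "cmod (M $$ (i,j)) \<le> S" if "i < d" "j < d" for i j
  proof -
    have "cmod (M $$ (i,j)) \<le> (\<Sum>j<d. cmod (M $$ (i,j)))"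
      using that by (intro member_le_sum) auto
    also have "\<dots> \<le> S" unfolding S_def using that by (intro member_le_sum[of i]) (auto intro: sum_nonneg)
    finally show ?thesis .
  qed
  show ?thesis
  proof (intro exI[of _ "2 * of_nat d * S + 1"] conjI ballI)
    show "0 < 2 * real d * S + 1" using S0 by (intro add_nonneg_pos mult_nonneg_nonneg) auto
    fix Y :: "complex mat" assume Y: "Y \<in> carrier_mat d d"
    define n where "n = (\<Sum>k<d. \<Sum>i<d. (cmod (Y $$ (i,k)))\<^sup>2)"
    have n: "Re (mtrace (adj Y * Y)) = n" unfolding n_def using mtrace_adj_self[OF Y] by simp
    have n0: "n \<ge> 0" unfolding n_def by (intro sum_nonneg) auto
    have "Re (mtrace (adj Y * M * Y)) \<le> cmod (sesq_sum d Y M Y)" using sesq_sum_eq[OF Y M Y] complex_Re_le_cmod by simp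
    also have "\<dots> \<le> (\<Sum>k<d. \<Sum>i<d. \<Sum>j<d. cmod (Y $$ (i,k)) * cmod (M $$ (i,j)) * cmod (Y $$ (j,k)))"
      unfolding sesq_sum_def
      by (rule order.trans[OF norm_sum], rule sum_mono, rule order.trans[OF norm_sum], rule sum_mono,
          rule order.trans[OF norm_sum], rule sum_mono) (simp add: norm_mult)
    also have "\<dots> \<le> (\<Sum>k<d. \<Sum>i<d. \<Sum>j<d. S * ((cmod (Y $$ (i,k)))\<^sup>2 + (cmod (Y $$ (j,k)))\<^sup>2))"
    proof (intro sum_mono)
      fix k i j assume "k \<in> {..<d}" "i \<in> {..<d}" "j \<in> {..<d}"
      then have ij: "i < d" "j < d" by auto
      let ?a = "cmod (Y $$ (i,k))" and ?b = "cmod (Y $$ (j,k))"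
      have ab: "?a * ?b \<le> ?a\<^sup>2 + ?b\<^sup>2"
        using sum_squares_bound[of ?a ?b] mult_nonneg_nonneg[OF norm_ge_zero norm_ge_zero, of "Y $$ (i,k)" "Y $$ (j,k)"] unfolding mult.assoc by linarith
      have "?a * cmod (M $$ (i,j)) * ?b = cmod (M $$ (i,j)) * (?a * ?b)" by simp
      also have "\<dots> \<le> S * (?a * ?b)" using Mij[OF ij] by (intro mult_right_mono) auto
      also have "\<dots> \<le> S * (?a\<^sup>2 + ?b\<^sup>2)" using ab S0 by (intro mult_left_mono) auto
      finally show "?a * cmod (M $$ (i,j)) * ?b \<le> S * (?a\<^sup>2 + ?b\<^sup>2)" .
    qed
    also have "\<dots> = S * (\<Sum>k<d. \<Sum>i<d. \<Sum>j<d. (cmod (Y $$ (i,k)))\<^sup>2) + S * (\<Sum>k<d. \<Sum>i<d. \<Sum>j<d. (cmod (Y $$ (j,k)))\<^sup>2)"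
      by (simp add: sum.distrib sum_distrib_left algebra_simps)
    also have "(\<Sum>k<d. \<Sum>i<d. \<Sum>j<d. (cmod (Y $$ (i,k)))\<^sup>2) = of_nat d * n"
      unfolding n_def by (simp add: sum_distrib_left)
    also have "(\<Sum>k<d. \<Sum>i<d. \<Sum>j<d. (cmod (Y $$ (j,k)))\<^sup>2) = of_nat d * n"
      unfolding n_def by (simp add: sum_distrib_left)
    also have "S * (of_nat d * n) + S * (of_nat d * n) \<le> (2 * real d * S + 1) * n"
      using n0 S0 by (simp add: algebra_simps)
    finally show "Re (mtrace (adj Y * M * Y)) \<le> (2 * real d * S + 1) * Re (mtrace (adj Y * Y))"
      using n by simp
  qed
qed

lemma sandwich_shift:
  assumes B: "B \<in> carrier_mat d d" and K: "K \<in> carrier_mat d d"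
  shows "B * (K - c \<cdot>\<^sub>m 1\<^sub>m d) * adj B = B * K * adj B - c \<cdot>\<^sub>m (B * adj B)"
proof -
  have "B * (K - c \<cdot>\<^sub>m 1\<^sub>m d) = B * K - c \<cdot>\<^sub>m B"
    using B K by (subst mult_minus_distrib_mat[of _ d d]) auto
  moreover have "(B * K - c \<cdot>\<^sub>m B) * adj B = B * K * adj B - c \<cdot>\<^sub>m (B * adj B)"
    using B K by (subst minus_mult_distrib_mat[of _ d d]) (auto simp: mult_smult_assoc_mat[of _ d d _ d])
  ultimately show ?thesis by simp
qed

lemma form_shift:
  assumes X: "X \<in> carrier_mat d d" and K: "K \<in> carrier_mat d d"
  shows "mtrace (adj X * (K - c \<cdot>\<^sub>m 1\<^sub>m d) * X) = mtrace (adj X * K * X) - c * mtrace (adj X * X)"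
proof -
  have "adj X * (K - c \<cdot>\<^sub>m 1\<^sub>m d) = adj X * K - c \<cdot>\<^sub>m adj X"
    using X K by (subst mult_minus_distrib_mat[of _ d d]) auto
  moreover have "(adj X * K - c \<cdot>\<^sub>m adj X) * X = adj X * K * X - c \<cdot>\<^sub>m (adj X * X)"
    using X K by (subst minus_mult_distrib_mat[of _ d d]) (auto simp: mult_smult_assoc_mat[of _ d d _ d])
  ultimately show ?thesis using X K by (simp add: mtrace_minus[of _ d] mtrace_smult[of _ d])
qed

lemma psd_channel_kernel_step:
  assumes B: "square_family d N B" and H: "hermitian d K" and Ps: "psd d K"
    and fx: "msum d (\<lambda>i. B i * K * adj (B i)) {1..N} = K"
    and i: "i \<in> {1..N}" and X: "X \<in> carrier_mat d d" and KX: "K * X = 0\<^sub>m d d"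
  shows "K * (adj (B i) * X) = 0\<^sub>m d d"
proof -
  have K: "K \<in> carrier_mat d d" using H by (simp add: hermitian_def)
  have Bi: "\<And>i. i \<in> {1..N} \<Longrightarrow> B i \<in> carrier_mat d d" using B by (auto simp: square_family_def)
  have Yc: "\<And>i. i \<in> {1..N} \<Longrightarrow> adj (B i) * X \<in> carrier_mat d d" using Bi X by simp
  have form_eq: "adj X * (B i * K * adj (B i)) * X = adj (adj (B i) * X) * K * (adj (B i) * X)"
    if "i \<in> {1..N}" for i
    using Bi[OF that] X K by (simp add: adj_mult[of _ d d _ d] assoc_mult_mat[of _ d d _ d _ d])
  have "0 = mtrace (adj X * K * X)"
    using KX X K by (simp add: assoc_mult_mat[of _ d d _ d _ d])
  also have "\<dots> = mtrace (adj X * msum d (\<lambda>i. B i * K * adj (B i)) {1..N} * X)"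
    using fx by simp
  also have "adj X * msum d (\<lambda>i. B i * K * adj (B i)) {1..N} * X
      = msum d (\<lambda>i. adj X * (B i * K * adj (B i)) * X) {1..N}"
    using Bi X K by (simp add: mult_msum[of _ d] msum_mult[of _ d])
  also have "mtrace \<dots> = (\<Sum>i\<in>{1..N}. mtrace (adj (adj (B i) * X) * K * (adj (B i) * X)))"
    using Bi X K form_eq by (subst mtrace_msum) auto
  finally have "(\<Sum>i\<in>{1..N}. Re (mtrace (adj (adj (B i) * X) * K * (adj (B i) * X)))) = 0"
    by (metis Re_sum zero_complex.simps(1))
  then have "\<forall>i\<in>{1..N}. Re (mtrace (adj (adj (B i) * X) * K * (adj (B i) * X))) = 0"
    using Ps Yc by (subst (asm) sum_nonneg_eq_0_iff) (auto simp: psd_def)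
  then show ?thesis using psd_form_zero_imp_mult_zero[OF H Ps Yc[OF i]] i by auto
qed

lemma psd_channel_kernel_wprod:
  assumes B: "square_family d N B" and H: "hermitian d K" and Ps: "psd d K"
    and fx: "msum d (\<lambda>i. B i * K * adj (B i)) {1..N} = K"
    and w: "set w \<subseteq> {1..N}" and X: "X \<in> carrier_mat d d" and KX: "K * X = 0\<^sub>m d d"
  shows "K * (adj (wprod d B w) * X) = 0\<^sub>m d d"
  using w X KX
proof (induction w arbitrary: X)
  case Nil then show ?case by simp
next
  case (Cons i w)
  have i: "i \<in> {1..N}" and ws: "set w \<subseteq> {1..N}" using Cons.prems by auto
  have Bi: "B i \<in> carrier_mat d d" using B i by (simp add: square_family_def)
  have W: "wprod d B w \<in> carrier_mat d d" using square_family_wprod_set[OF B ws] .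
  have "adj (wprod d B (i # w)) * X = adj (wprod d B w) * (adj (B i) * X)"
    using Bi W Cons.prems(2) by (simp add: adj_mult[of _ d d _ d] assoc_mult_mat[of _ d d _ d _ d])
  then show ?case
    using Cons.IH[OF ws] psd_channel_kernel_step[OF B H Ps fx i Cons.prems(2,3)] Bi Cons.prems(2) by simp
qed

lemma singular_psd_channel_fixed_point:
  assumes B: "square_family d N B" and spB: "words_span d N B l"
    and H: "hermitian d K" and Ps: "psd d K"
    and fx: "msum d (\<lambda>i. B i * K * adj (B i)) {1..N} = K" and det: "det K = 0"
  shows "K = 0\<^sub>m d d"
proof -
  have K: "K \<in> carrier_mat d d" "adj K = K" using H by (auto simp: hermitian_def)
  obtain X where X: "X \<in> carrier_mat d d" "X \<noteq> 0\<^sub>m d d" "K * X = 0\<^sub>m d d"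
    using det_0_right_annihilator[OF K(1) det] .
  have aX: "adj X \<noteq> 0\<^sub>m d d" using X(2) by (metis adj_adj adj_zero)
  have B_wprod: "\<And>w. w \<in> words N l \<Longrightarrow> wprod d B w \<in> carrier_mat d d"
    using square_family_wprod[OF B] by auto
  show ?thesis
  proof (rule sandwich_eq_0[OF _ K(1) aX])
    show "adj X \<in> carrier_mat d d" using X by simp
    fix M :: "complex mat" assume M: "M \<in> carrier_mat d d"
    obtain b where b: "M = word_comb d N B l b" using spB M unfolding words_span_def by blast
    have z: "adj X * (wprod d B w * K) = 0\<^sub>m d d" if w: "w \<in> words N l" for w
    proof -
      have "K * (adj (wprod d B w) * X) = 0\<^sub>m d d"
        using psd_channel_kernel_wprod[OF B H Ps fx _ X(1,3)] w by (simp add: words_def)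
      then have "adj (K * (adj (wprod d B w) * X)) = 0\<^sub>m d d" by simp
      moreover have "adj (K * (adj (wprod d B w) * X)) = adj X * (wprod d B w * K)"
        using B_wprod[OF w] X K by (simp add: adj_mult[of _ d d _ d] assoc_mult_mat[of _ d d _ d _ d])
      ultimately show ?thesis by simp
    qed
    have "adj X * M * K = adj X * (word_comb d N B l b * K)"
      using b X K by (simp add: assoc_mult_mat[of _ d d _ d _ d])
    also have "\<dots> = msum d (\<lambda>w. adj X * (b w \<cdot>\<^sub>m (wprod d B w * K))) (words N l)"
      using word_comb_mult_right[OF B K(1)] X B_wprod K
      by (simp, subst mult_msum[of _ d]) (auto intro!: smult_carrier_mat)
    also have "\<dots> = 0\<^sub>m d d"
      using z X B_wprod K by (intro msum_zero) (simp add: mult_smult_distrib[of _ d d _ d])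
    finally show "adj X * M * K = 0\<^sub>m d d" .
  qed
qed

lemma invertible_psd_bounded_below:
  assumes H: "hermitian d K" and Ps: "psd d K" and det: "det K \<noteq> 0"
  obtains \<epsilon> :: real where "\<epsilon> > 0"
    "\<And>Y. Y \<in> carrier_mat d d \<Longrightarrow> \<epsilon> * Re (mtrace (adj Y * Y)) \<le> Re (mtrace (adj Y * K * Y))"
proof -
  have K: "K \<in> carrier_mat d d" "adj K = K" using H by (auto simp: hermitian_def)
  obtain M where M: "M \<in> carrier_mat d d" "K * M = 1\<^sub>m d" "M * K = 1\<^sub>m d"
    using det_non_zero_imp_unit[OF K(1) det, unfolded Units_def ring_mat_def] by auto
  have aM: "adj M = M"
  proof -
    have aMK: "adj M * K = 1\<^sub>m d" using K M by (metis adj_mult adj_one)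
    have "adj M = adj M * (K * M)" using M by simp
    also have "\<dots> = (adj M * K) * M" using M K by (simp add: assoc_mult_mat[of _ d d _ d _ d])
    finally show ?thesis using aMK M by simp
  qed
  obtain C where C: "C > 0" "\<And>Y. Y \<in> carrier_mat d d \<Longrightarrow> Re (mtrace (adj Y * M * Y)) \<le> C * Re (mtrace (adj Y * Y))"
    using form_bounded_by_norm[OF M(1)] by blast
  show ?thesis
  proof
    show "1 / C > 0" using C(1) by simp
    fix Y :: "complex mat" assume Y: "Y \<in> carrier_mat d d"
    define n where "n = Re (mtrace (adj Y * Y))"
    define q where "q = Re (mtrace (adj Y * K * Y))"
    have n0: "n \<ge> 0" unfolding n_def using mtrace_adj_self_Re[OF Y] by simp
    have q0: "q \<ge> 0" unfolding q_def using Ps Y by (auto simp: psd_def)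
    txt \<open>Cauchy--Schwarz for the form of \<open>K\<close>, applied to \<open>M Y\<close> and \<open>Y\<close>.\<close>
    have "n \<le> C * q"
    proof (cases "n = 0")
      case True then show ?thesis using q0 C by simp
    next
      case False
      then have np: "n > 0" using n0 by simp
      define Z where "Z = M * Y"
      have Zc: "Z \<in> carrier_mat d d" unfolding Z_def using M Y by simp
      have aZ: "adj Z = adj Y * M" unfolding Z_def using M Y aM by (simp add: adj_mult[of _ d d _ d])
      have e1: "mtrace (adj Z * K * Y) = mtrace (adj Y * Y)"
        using aZ M Y K by (simp add: assoc_mult_mat[of _ d d _ d _ d])
      have e2: "mtrace (adj Z * K * Z) = mtrace (adj Y * M * Y)"
        using aZ M Y K unfolding Z_def by (simp add: assoc_mult_mat[of _ d d _ d _ d])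
      have tr: "mtrace (adj Y * Y) = of_real n"
        unfolding n_def using mtrace_adj_self_Re[OF Y] by (simp add: complex_eq_iff)
      have "n\<^sup>2 \<le> Re (mtrace (adj Z * K * Z)) * q"
        using cauchy_schwarz_psd[OF H Ps Zc Y] e1 tr n0 unfolding q_def by simp
      also have "\<dots> \<le> (C * n) * q" using e2 C(2)[OF Y] q0 unfolding n_def by (simp add: mult_right_mono)
      finally have "n * n \<le> n * (C * q)" by (simp add: power2_eq_square algebra_simps)
      then show ?thesis using np by simp
    qed
    then show "1 / C * Re (mtrace (adj Y * Y)) \<le> Re (mtrace (adj Y * K * Y))"
      using C(1) unfolding n_def q_def by (simp add: field_simps)
  qed
qed

lemma psd_best_lower_bound:
  assumes d: "0 < d" and K: "K \<in> carrier_mat d d" and Ps: "psd d K"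
  obtains lam :: real where
    "\<And>X. X \<in> carrier_mat d d \<Longrightarrow> lam * Re (mtrace (adj X * X)) \<le> Re (mtrace (adj X * K * X))"
    "\<And>t. (\<And>X. X \<in> carrier_mat d d \<Longrightarrow> t * Re (mtrace (adj X * X)) \<le> Re (mtrace (adj X * K * X))) \<Longrightarrow> t \<le> lam"
proof -
  define S where "S = {t::real. \<forall>X\<in>carrier_mat d d. t * Re (mtrace (adj X * X)) \<le> Re (mtrace (adj X * K * X))}"
  have S0: "0 \<in> S" using Ps unfolding S_def psd_def by auto
  have Sb: "t \<le> Re (mtrace K) / of_nat d" if "t \<in> S" for t
  proof -
    have "t * Re (mtrace (adj (1\<^sub>m d) * 1\<^sub>m d)) \<le> Re (mtrace (adj (1\<^sub>m d) * K * 1\<^sub>m d))"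
      using that unfolding S_def by (intro bspec[of _ _ "1\<^sub>m d"]) auto
    then have "t * of_nat d \<le> Re (mtrace K)" using K by simp
    then show ?thesis using d by (simp add: field_simps)
  qed
  have bdd: "bdd_above S" using Sb by (intro bdd_aboveI[of S "Re (mtrace K) / of_nat d"]) auto
  define lam where "lam = Sup S"
  have lamS: "lam \<in> S"
    unfolding S_def
  proof (intro CollectI ballI)
    fix X :: "complex mat" assume X: "X \<in> carrier_mat d d"
    define n where "n = Re (mtrace (adj X * X))"
    define q where "q = Re (mtrace (adj X * K * X))"
    have n0: "n \<ge> 0" unfolding n_def using mtrace_adj_self_Re[OF X] by simp
    have q0: "q \<ge> 0" unfolding q_def using Ps X by (auto simp: psd_def)
    show "lam * Re (mtrace (adj X * X)) \<le> Re (mtrace (adj X * K * X))"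
    proof (cases "n = 0")
      case True then show ?thesis using q0 unfolding n_def q_def by simp
    next
      case False
      then have np: "n > 0" using n0 by simp
      have "\<And>t. t \<in> S \<Longrightarrow> t \<le> q / n"
        using X np unfolding S_def n_def q_def by (auto simp: field_simps)
      then have "lam \<le> q / n" unfolding lam_def using S0 by (intro cSup_least) auto
      then show ?thesis using np unfolding n_def[symmetric] q_def[symmetric] by (simp add: field_simps)
    qed
  qed
  show ?thesis
  proof (rule that)
    fix X :: "complex mat" assume "X \<in> carrier_mat d d"
    then show "lam * Re (mtrace (adj X * X)) \<le> Re (mtrace (adj X * K * X))" using lamS unfolding S_def by blast
  next
    fix t assume "\<And>X. X \<in> carrier_mat d d \<Longrightarrow> t * Re (mtrace (adj X * X)) \<le> Re (mtrace (adj X * K * X))"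
    then have "t \<in> S" unfolding S_def by blast
    then show "t \<le> lam" unfolding lam_def using bdd by (intro cSup_upper)
  qed
qed

lemma channel_fixed_point_shift:
  assumes B: "square_family d N B" and K: "K \<in> carrier_mat d d"
    and canB: "msum d (\<lambda>i. B i * adj (B i)) {1..N} = 1\<^sub>m d"
    and fx: "msum d (\<lambda>i. B i * K * adj (B i)) {1..N} = K"
  shows "msum d (\<lambda>i. B i * (K - c \<cdot>\<^sub>m 1\<^sub>m d) * adj (B i)) {1..N} = K - c \<cdot>\<^sub>m 1\<^sub>m d"
proof -
  have Bi: "\<And>i. i \<in> {1..N} \<Longrightarrow> B i \<in> carrier_mat d d" using B by (auto simp: square_family_def)
  have "msum d (\<lambda>i. B i * (K - c \<cdot>\<^sub>m 1\<^sub>m d) * adj (B i)) {1..N}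
      = msum d (\<lambda>i. B i * K * adj (B i) - c \<cdot>\<^sub>m (B i * adj (B i))) {1..N}"
    using Bi K by (intro msum_cong sandwich_shift) auto
  also have "\<dots> = msum d (\<lambda>i. B i * K * adj (B i)) {1..N} - msum d (\<lambda>i. c \<cdot>\<^sub>m (B i * adj (B i))) {1..N}"
    using Bi by (subst msum_minus) auto
  also have "msum d (\<lambda>i. c \<cdot>\<^sub>m (B i * adj (B i))) {1..N} = c \<cdot>\<^sub>m msum d (\<lambda>i. B i * adj (B i)) {1..N}"
    using Bi by (subst msum_smult) auto
  finally show ?thesis using fx canB by simp
qed

lemma channel_fixed_point_scalar:
  assumes d: "0 < d" and B: "square_family d N B" and spB: "words_span d N B l"
    and canB: "msum d (\<lambda>i. B i * adj (B i)) {1..N} = 1\<^sub>m d"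
    and H: "hermitian d K" and Ps: "psd d K"
    and fx: "msum d (\<lambda>i. B i * K * adj (B i)) {1..N} = K"
  shows "\<exists>c::real. K = of_real c \<cdot>\<^sub>m 1\<^sub>m d"
proof -
  have K: "K \<in> carrier_mat d d" "adj K = K" using H by (auto simp: hermitian_def)
  txt \<open>Shift \<open>K\<close> by the largest \<open>\<lambda>\<close> with \<open>K \<ge> \<lambda>\<close>: the shifted fixed point cannot be bounded below,
    so it is singular, hence zero.\<close>
  obtain lam where lam: "\<And>X. X \<in> carrier_mat d d \<Longrightarrow> lam * Re (mtrace (adj X * X)) \<le> Re (mtrace (adj X * K * X))"
    and lam_max: "\<And>t. (\<And>X. X \<in> carrier_mat d d \<Longrightarrow> t * Re (mtrace (adj X * X)) \<le> Re (mtrace (adj X * K * X))) \<Longrightarrow> t \<le> lam"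
    using psd_best_lower_bound[OF d K(1) Ps] by blast
  define K' where "K' = K - of_real lam \<cdot>\<^sub>m 1\<^sub>m d"
  have HK': "hermitian d K'" unfolding hermitian_def K'_def using K
    by (auto intro!: minus_carrier_mat simp: adj_minus[of _ d d] adj_smult)
  have qK': "mtrace (adj X * K' * X) = mtrace (adj X * K * X) - of_real lam * mtrace (adj X * X)"
    if "X \<in> carrier_mat d d" for X
    unfolding K'_def by (rule form_shift[OF that K(1)])
  have PK': "psd d K'" unfolding psd_def
  proof
    fix X :: "complex mat" assume X: "X \<in> carrier_mat d d"
    show "0 \<le> Re (mtrace (adj X * K' * X))" using lam[OF X] qK'[OF X] by simp
  qed
  have fxK': "msum d (\<lambda>i. B i * K' * adj (B i)) {1..N} = K'"
    unfolding K'_def by (rule channel_fixed_point_shift[OF B K(1) canB fx])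
  have "det K' = 0"
  proof (rule ccontr)
    assume "det K' \<noteq> 0"
    then obtain \<epsilon> where \<epsilon>: "\<epsilon> > 0"
      "\<And>Y. Y \<in> carrier_mat d d \<Longrightarrow> \<epsilon> * Re (mtrace (adj Y * Y)) \<le> Re (mtrace (adj Y * K' * Y))"
      using invertible_psd_bounded_below[OF HK' PK'] by blast
    have "lam + \<epsilon> \<le> lam"
    proof (rule lam_max)
      fix X :: "complex mat" assume X: "X \<in> carrier_mat d d"
      show "(lam + \<epsilon>) * Re (mtrace (adj X * X)) \<le> Re (mtrace (adj X * K * X))"
        using \<epsilon>(2)[OF X] qK'[OF X] by (simp add: algebra_simps)
    qed
    then show False using \<epsilon>(1) by simp
  qed
  then have K'0: "K' = 0\<^sub>m d d" by (rule singular_psd_channel_fixed_point[OF B spB HK' PK' fxK'])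
  have "K = of_real lam \<cdot>\<^sub>m 1\<^sub>m d"
  proof (rule eq_matI)
    fix x y assume "x < dim_row (of_real lam \<cdot>\<^sub>m 1\<^sub>m d :: complex mat)" "y < dim_col (of_real lam \<cdot>\<^sub>m 1\<^sub>m d :: complex mat)"
    then have xy: "x < d" "y < d" by auto
    have "K' $$ (x,y) = 0" using K'0 xy by simp
    then show "K $$ (x,y) = (of_real lam \<cdot>\<^sub>m 1\<^sub>m d) $$ (x,y)" using xy K unfolding K'_def by simp
  qed (use K in auto)
  then show ?thesis by blast
qed

section \<open>Twisted trace equivalence gives a gauge transformation\<close>

text \<open>\<open>P = Q = 1\<close> for \<open>gauge_equiv\<close>, and \<open>P, Q\<close> the Wall matrices for \<open>gauge_equiv_PBC\<close>.\<close>

locale trace_equiv =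
  fixes d N :: nat and A B :: "nat \<Rightarrow> complex mat" and P Q Qi :: "complex mat"
    and l :: nat and \<alpha> :: "nat \<Rightarrow> real"
  assumes d: "0 < d"
    and A: "square_family d N A" and B: "square_family d N B"
    and canA: "msum d (\<lambda>i. A i * adj (A i)) {1..N} = 1\<^sub>m d"
    and canB: "msum d (\<lambda>i. B i * adj (B i)) {1..N} = 1\<^sub>m d"
    and spA: "words_span d N A l" and spB: "words_span d N B l"
    and P: "P \<in> carrier_mat d d" and Q: "Q \<in> carrier_mat d d" and Qi: "Qi \<in> carrier_mat d d"
    and QiQ: "Qi * Q = 1\<^sub>m d" and P_nonzero: "P \<noteq> 0\<^sub>m d d"
    and tr: "\<And>L w. w \<in> words N L \<Longrightarrow> mtrace (P * wprod d A w) = exp (\<i> * of_real (\<alpha> L)) * mtrace (Q * wprod d B w)"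
begin

lemma A_span_ge: "l \<le> m \<Longrightarrow> words_span d N A m" using words_span_mono[OF A canA spA] .
lemma B_span_ge: "l \<le> m \<Longrightarrow> words_span d N B m" using words_span_mono[OF B canB spB] .

lemma Ai_carrier: "i \<in> {1..N} \<Longrightarrow> A i \<in> carrier_mat d d" using A by (auto simp: square_family_def)
lemma Bi_carrier: "i \<in> {1..N} \<Longrightarrow> B i \<in> carrier_mat d d" using B by (auto simp: square_family_def)

lemma A_wprod_carrier: "w \<in> words N m \<Longrightarrow> wprod d A w \<in> carrier_mat d d" using square_family_wprod[OF A] by auto
lemma B_wprod_carrier: "w \<in> words N m \<Longrightarrow> wprod d B w \<in> carrier_mat d d" using square_family_wprod[OF B] by auto

lemma word_comb_zero_transfer:
  assumes T_index: "word_comb d N A m a = 0\<^sub>m d d"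
  shows "word_comb d N B m a = 0\<^sub>m d d"
proof -
  define X where "X = word_comb d N B m a"
  have X: "X \<in> carrier_mat d d" by (simp add: X_def)
  have QXv: "mtrace (Q * (X * wprod d B v)) = 0" if v: "v \<in> words N l" for v
  proof -
    have Av: "wprod d A v \<in> carrier_mat d d" and Bv: "wprod d B v \<in> carrier_mat d d" using A_wprod_carrier[OF v] B_wprod_carrier[OF v] .
    have "0 = mtrace (P * (word_comb d N A m a * wprod d A v))"
      using T_index P Av by simp
    also have "\<dots> = (\<Sum>w\<in>words N m. a w * mtrace (P * (wprod d A w * wprod d A v)))"
      by (rule mtrace_word_comb_sandwich[OF A P Av])
    also have "\<dots> = (\<Sum>w\<in>words N m. a w * (exp (\<i> * of_real (\<alpha> (m+l))) * mtrace (Q * (wprod d B w * wprod d B v))))"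
    proof (rule sum.cong[OF refl])
      fix w assume w: "w \<in> words N m"
      have wv: "w @ v \<in> words N (m+l)" using w v by (auto simp: words_def)
      have "wprod d A (w @ v) = wprod d A w * wprod d A v"
        using w v A by (intro wprod_append) (auto simp: square_family_def words_def)
      moreover have "wprod d B (w @ v) = wprod d B w * wprod d B v"
        using w v B by (intro wprod_append) (auto simp: square_family_def words_def)
      ultimately show "a w * mtrace (P * (wprod d A w * wprod d A v)) = a w * (exp (\<i> * of_real (\<alpha> (m+l))) * mtrace (Q * (wprod d B w * wprod d B v)))"
        using tr[OF wv] by simp
    qed
    also have "\<dots> = exp (\<i> * of_real (\<alpha> (m+l))) * (\<Sum>w\<in>words N m. a w * mtrace (Q * (wprod d B w * wprod d B v)))"
      by (simp add: sum_distrib_left algebra_simps)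
    also have "\<dots> = exp (\<i> * of_real (\<alpha> (m+l))) * mtrace (Q * (X * wprod d B v))"
      unfolding X_def by (simp add: mtrace_word_comb_sandwich[OF B Q Bv])
    finally show ?thesis by simp
  qed
  have "Q * X = 0\<^sub>m d d"
  proof (rule trace_pairing_nondegenerate)
    show "Q * X \<in> carrier_mat d d" using Q X by simp
    fix M :: "complex mat" assume M: "M \<in> carrier_mat d d"
    then obtain c where c: "M = word_comb d N B l c" using spB unfolding words_span_def by blast
    have "mtrace (Q * X * M) = (\<Sum>v\<in>words N l. c v * mtrace (Q * X * wprod d B v))"
      unfolding c by (rule mtrace_word_comb_left[OF B]) (use Q X in simp)
    also have "\<dots> = 0"
      using QXv B_wprod_carrier Q X by (auto intro!: sum.neutral simp: assoc_mult_mat[of _ d d _ d _ d])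
    finally show "mtrace (Q * X * M) = 0" .
  qed
  then have "Qi * (Q * X) = 0\<^sub>m d d" using Qi by simp
  then show ?thesis using QiQ Q Qi X unfolding X_def[symmetric]
    by (metis assoc_mult_mat left_mult_one_mat)
qed

lemma word_comb_eq_transfer:
  assumes "word_comb d N A m a = word_comb d N A m b"
  shows "word_comb d N B m a = word_comb d N B m b"
  using word_comb_zero_transfer[OF word_comb_eq_sub0[OF A assms]] word_comb_sub0_eq[OF B] by blast

text \<open>Well defined: by \<open>word_comb_eq_transfer\<close> all coefficient vectors representing \<open>M\<close> give the
  same combination of the \<open>B\<^sub>w\<close>.\<close>

definition word_map :: "nat \<Rightarrow> complex mat \<Rightarrow> complex mat" where
  "word_map m M = word_comb d N B m (SOME a. M = word_comb d N A m a)"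

lemma word_map_eq: "M = word_comb d N A m a \<Longrightarrow> word_map m M = word_comb d N B m a"
  unfolding word_map_def by (rule word_comb_eq_transfer, rule someI2[of _ a]) auto

lemma word_map_carrier[simp]: "word_map m M \<in> carrier_mat d d"
  by (simp add: word_map_def)

lemma A_word_comb_exists: "l \<le> m \<Longrightarrow> M \<in> carrier_mat d d \<Longrightarrow> \<exists>a. M = word_comb d N A m a"
  using A_span_ge unfolding words_span_def by blast
lemma B_word_comb_exists: "l \<le> m \<Longrightarrow> M \<in> carrier_mat d d \<Longrightarrow> \<exists>a. M = word_comb d N B m a"
  using B_span_ge unfolding words_span_def by blast

lemma word_map_mult:
  assumes "X = word_comb d N A m a" "Y = word_comb d N A k b"
  shows "word_map (m+k) (X * Y) = word_map m X * word_map k Y"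
  using assms word_map_eq word_comb_mult[OF A] word_comb_mult[OF B] by metis

lemma word_map_mult_ge:
  assumes "l \<le> m" "l \<le> k" "X \<in> carrier_mat d d" "Y \<in> carrier_mat d d"
  shows "word_map (m+k) (X * Y) = word_map m X * word_map k Y"
  using A_word_comb_exists[OF assms(1,3)] A_word_comb_exists[OF assms(2,4)] word_map_mult by blast

lemma word_map_single: "i \<in> {1..N} \<Longrightarrow> word_map 1 (A i) = B i"
  using word_map_eq[OF word_comb_single[OF A, symmetric]] word_comb_single[OF B] by metis

lemma word_map_letter_mult:
  assumes "l \<le> k" "i \<in> {1..N}" "Y \<in> carrier_mat d d"
  shows "word_map (1+k) (A i * Y) = B i * word_map k Y"
proof -
  obtain b where "Y = word_comb d N A k b" using A_word_comb_exists[OF assms(1,3)] by blast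
  then show ?thesis using word_map_mult[OF word_comb_single[OF A assms(2), symmetric]] word_map_single[OF assms(2)]
    by metis
qed

lemma word_map_lin:
  assumes "l \<le> m" "finite J" "\<forall>j\<in>J. M j \<in> carrier_mat d d"
  shows "word_map m (msum d (\<lambda>j. s j \<cdot>\<^sub>m M j) J) = msum d (\<lambda>j. s j \<cdot>\<^sub>m word_map m (M j)) J"
proof -
  have "\<forall>j\<in>J. \<exists>a. M j = word_comb d N A m a" using A_word_comb_exists[OF assms(1)] assms(3) by blast
  then obtain a where a: "\<And>j. j \<in> J \<Longrightarrow> M j = word_comb d N A m (a j)" by metis
  have "msum d (\<lambda>j. s j \<cdot>\<^sub>m M j) J = msum d (\<lambda>j. s j \<cdot>\<^sub>m word_comb d N A m (a j)) J"
    using a by (intro msum_cong) auto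
  also have "\<dots> = word_comb d N A m (\<lambda>w. \<Sum>j\<in>J. s j * a j w)" by (rule word_comb_lin[OF A assms(2)])
  finally have "word_map m (msum d (\<lambda>j. s j \<cdot>\<^sub>m M j) J) = word_comb d N B m (\<lambda>w. \<Sum>j\<in>J. s j * a j w)"
    by (rule word_map_eq)
  also have "\<dots> = msum d (\<lambda>j. s j \<cdot>\<^sub>m word_comb d N B m (a j)) J" by (rule word_comb_lin[OF B assms(2), symmetric])
  also have "\<dots> = msum d (\<lambda>j. s j \<cdot>\<^sub>m word_map m (M j)) J"
    using a word_map_eq by (intro msum_cong) auto
  finally show ?thesis .
qed

lemma word_map_surj:
  assumes "l \<le> m" "Y \<in> carrier_mat d d"
  shows "\<exists>X\<in>carrier_mat d d. word_map m X = Y"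
proof -
  obtain b where "Y = word_comb d N B m b" using B_word_comb_exists[OF assms] by blast
  then show ?thesis using word_map_eq[of "word_comb d N A m b" m b] by auto
qed

text \<open>The images of \<open>1\<close> at lengths \<open>l\<close> and \<open>l + 1\<close> commute with everything, so they are scalars;
  their ratio is the phase \<open>\<gamma>\<close> of the intertwining relation.\<close>

definition "one_l = word_map l (1\<^sub>m d)"
definition "c_l = one_l $$ (0,0)"
definition "one_Suc_l = word_map (Suc l) (1\<^sub>m d)"
definition "c_Suc_l = one_Suc_l $$ (0,0)"
definition "phase = c_Suc_l / c_l"

lemma word_map_l_plus_l:
  assumes X: "X \<in> carrier_mat d d"
  shows "word_map (l+l) X = word_map l X * one_l" "word_map (l+l) X = one_l * word_map l X"
proof -
  show "word_map (l+l) X = word_map l X * one_l"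
    using word_map_mult_ge[of l l X "1\<^sub>m d"] X unfolding one_l_def by simp
  show "word_map (l+l) X = one_l * word_map l X"
    using word_map_mult_ge[of l l "1\<^sub>m d" X] X unfolding one_l_def by simp
qed

lemma word_map_dims[simp]: "dim_row (word_map m X) = d" "dim_col (word_map m X) = d"
  using word_map_carrier[of m X] by (auto simp del: word_map_carrier)

lemma one_l_carrier[simp]: "one_l \<in> carrier_mat d d" by (simp add: one_l_def)
lemma one_Suc_l_carrier[simp]: "one_Suc_l \<in> carrier_mat d d" by (simp add: one_Suc_l_def)

lemma one_l_scalar: "one_l = c_l \<cdot>\<^sub>m 1\<^sub>m d"
  unfolding c_l_def
proof (rule commuting_mat_scalar[OF one_l_carrier d])
  fix M :: "complex mat" assume M: "M \<in> carrier_mat d d"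
  obtain X where X: "X \<in> carrier_mat d d" "word_map l X = M" using word_map_surj[OF le_refl M] by blast
  show "one_l * M = M * one_l" using word_map_l_plus_l[OF X(1)] X(2) by simp
qed

lemma c_l_nonzero: "c_l \<noteq> 0"
proof
  assume p0: "c_l = 0"
  obtain X where X: "X \<in> carrier_mat d d" "word_map (l+l) X = 1\<^sub>m d" using word_map_surj[of "l+l" "1\<^sub>m d"] by auto
  have "word_map (l+l) X = 0\<^sub>m d d" using word_map_l_plus_l(1)[OF X(1)] one_l_scalar p0 by simp
  then have "(1\<^sub>m d :: complex mat) $$ (0,0) = (0\<^sub>m d d :: complex mat) $$ (0,0)" using X(2) by simp
  then show False using d by simp
qed

lemma word_map_Suc_l:
  assumes X: "X \<in> carrier_mat d d"
  shows "word_map l X * one_Suc_l = c_l \<cdot>\<^sub>m word_map (Suc l) X" "one_Suc_l * word_map l X = c_l \<cdot>\<^sub>m word_map (Suc l) X"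
proof -
  have e: "word_map (l + Suc l) = word_map (Suc l + l)" by (simp add: add.commute)
  have a: "word_map (l + Suc l) (X * 1\<^sub>m d) = word_map l X * one_Suc_l"
    using word_map_mult_ge[of l "Suc l" X "1\<^sub>m d"] X unfolding one_Suc_l_def by simp
  have b: "word_map (Suc l + l) (X * 1\<^sub>m d) = word_map (Suc l) X * one_l"
    using word_map_mult_ge[of "Suc l" l X "1\<^sub>m d"] X unfolding one_l_def by simp
  have c: "word_map (l + Suc l) (1\<^sub>m d * X) = one_l * word_map (Suc l) X"
    using word_map_mult_ge[of l "Suc l" "1\<^sub>m d" X] X unfolding one_l_def by simp
  have dd: "word_map (Suc l + l) (1\<^sub>m d * X) = one_Suc_l * word_map l X"
    using word_map_mult_ge[of "Suc l" l "1\<^sub>m d" X] X unfolding one_Suc_l_def by simp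
  have Ps: "word_map (Suc l) X * one_l = c_l \<cdot>\<^sub>m word_map (Suc l) X" "one_l * word_map (Suc l) X = c_l \<cdot>\<^sub>m word_map (Suc l) X"
    by (subst one_l_scalar, simp add: word_map_carrier)+
  show "word_map l X * one_Suc_l = c_l \<cdot>\<^sub>m word_map (Suc l) X" using a b e Ps by simp
  show "one_Suc_l * word_map l X = c_l \<cdot>\<^sub>m word_map (Suc l) X" using c dd e Ps by simp
qed

lemma one_Suc_l_scalar: "one_Suc_l = c_Suc_l \<cdot>\<^sub>m 1\<^sub>m d"
  unfolding c_Suc_l_def
proof (rule commuting_mat_scalar[OF one_Suc_l_carrier d])
  fix M :: "complex mat" assume M: "M \<in> carrier_mat d d"
  obtain X where X: "X \<in> carrier_mat d d" "word_map l X = M" using word_map_surj[OF le_refl M] by blast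
  show "one_Suc_l * M = M * one_Suc_l" using word_map_Suc_l[OF X(1)] X(2) by simp
qed

lemma word_map_Suc_l_phase:
  assumes X: "X \<in> carrier_mat d d"
  shows "word_map (Suc l) X = phase \<cdot>\<^sub>m word_map l X"
proof -
  have "c_l \<cdot>\<^sub>m word_map (Suc l) X = c_Suc_l \<cdot>\<^sub>m word_map l X"
    using word_map_Suc_l(1)[OF X] one_Suc_l_scalar by simp
  then have "(1/c_l) \<cdot>\<^sub>m (c_l \<cdot>\<^sub>m word_map (Suc l) X) = (1/c_l) \<cdot>\<^sub>m (c_Suc_l \<cdot>\<^sub>m word_map l X)" by simp
  then show ?thesis using c_l_nonzero by (simp add: smult_smult_mat' phase_def)
qed

lemma B_word_map:
  assumes i: "i \<in> {1..N}" and Y: "Y \<in> carrier_mat d d"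
  shows "B i * word_map l Y = phase \<cdot>\<^sub>m word_map l (A i * Y)"
proof -
  have Ai: "A i \<in> carrier_mat d d" using A i by (auto simp: square_family_def)
  have "B i * word_map l Y = word_map (1 + l) (A i * Y)" using word_map_letter_mult[OF le_refl i Y] by simp
  also have "\<dots> = phase \<cdot>\<^sub>m word_map l (A i * Y)" using word_map_Suc_l_phase[of "A i * Y"] Ai Y by simp
  finally show ?thesis .
qed

text \<open>Column \<open>a\<close> of the images of the matrix units \<open>E\<^sub>k\<^sub>0\<close>: reading \<open>B_word_map\<close> at entry \<open>(r, a)\<close>
  gives \<open>B\<^sub>i T = \<gamma> T A\<^sub>i\<close>.\<close>

definition T_of :: "nat \<Rightarrow> complex mat" where
  "T_of a = mat d d (\<lambda>(r,k). word_map l (emat d k 0) $$ (r,a))"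

lemma T_of_carrier[simp]: "T_of a \<in> carrier_mat d d" by (simp add: T_of_def)
lemma T_of_dims[simp]: "dim_row (T_of a) = d" "dim_col (T_of a) = d" by (simp_all add: T_of_def)

lemma A_mult_emat_col:
  assumes i: "i \<in> {1..N}" and k: "k < d"
  shows "A i * emat d k 0 = msum d (\<lambda>j. (A i $$ (j,k)) \<cdot>\<^sub>m emat d j 0) {..<d}"
proof (rule eq_matI)
  fix x y assume "x < dim_row (msum d (\<lambda>j. (A i $$ (j,k)) \<cdot>\<^sub>m emat d j 0) {..<d})"
    "y < dim_col (msum d (\<lambda>j. (A i $$ (j,k)) \<cdot>\<^sub>m emat d j 0) {..<d})"
  then have xy: "x < d" "y < d" by auto
  have "(A i * emat d k 0) $$ (x,y) = (if y = 0 then A i $$ (x,k) else 0)"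
    using mult_emat_index[OF Ai_carrier[OF i] xy k d] by simp
  moreover have "msum d (\<lambda>j. (A i $$ (j,k)) \<cdot>\<^sub>m emat d j 0) {..<d} $$ (x,y) = (\<Sum>j<d. ((A i $$ (j,k)) \<cdot>\<^sub>m emat d j 0) $$ (x,y))"
    by (rule msum_index[OF xy])
  moreover have "\<dots> = (\<Sum>j<d. if j = x then (if y = 0 then A i $$ (j,k) else 0) else 0)"
    by (rule sum.cong) (use xy in auto)
  moreover have "\<dots> = (if y = 0 then A i $$ (x,k) else 0)" using xy by simp
  ultimately show "(A i * emat d k 0) $$ (x,y) = msum d (\<lambda>j. (A i $$ (j,k)) \<cdot>\<^sub>m emat d j 0) {..<d} $$ (x,y)"
    by simp
qed (use Ai_carrier[OF i] in auto)

lemma B_T_of: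
  assumes i: "i \<in> {1..N}" and a: "a < d"
  shows "B i * T_of a = phase \<cdot>\<^sub>m (T_of a * A i)"
proof (rule eq_matI)
  fix r k assume "r < dim_row (phase \<cdot>\<^sub>m (T_of a * A i))" "k < dim_col (phase \<cdot>\<^sub>m (T_of a * A i))"
  then have rk: "r < d" "k < d" using Ai_carrier[OF i] by auto
  have Bi: "B i \<in> carrier_mat d d" and Ai: "A i \<in> carrier_mat d d" using Bi_carrier[OF i] Ai_carrier[OF i] .
  have "(B i * T_of a) $$ (r,k) = (B i * word_map l (emat d k 0)) $$ (r,a)"
    using Bi rk a by (simp add: T_of_def scalar_prod_def lessThan_atLeast0)
  also have "\<dots> = phase * word_map l (A i * emat d k 0) $$ (r,a)"
    using B_word_map[OF i, of "emat d k 0"] rk a by simp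
  also have "word_map l (A i * emat d k 0) = msum d (\<lambda>j. (A i $$ (j,k)) \<cdot>\<^sub>m word_map l (emat d j 0)) {..<d}"
    unfolding A_mult_emat_col[OF i rk(2)] by (rule word_map_lin) auto
  also have "phase * msum d (\<lambda>j. (A i $$ (j,k)) \<cdot>\<^sub>m word_map l (emat d j 0)) {..<d} $$ (r,a)
      = phase * (\<Sum>j<d. word_map l (emat d j 0) $$ (r,a) * A i $$ (j,k))"
    using rk a by (simp add: mult.commute)
  also have "\<dots> = (phase \<cdot>\<^sub>m (T_of a * A i)) $$ (r,k)"
    using Ai rk a by (simp add: T_of_def scalar_prod_def lessThan_atLeast0)
  finally show "(B i * T_of a) $$ (r,k) = (phase \<cdot>\<^sub>m (T_of a * A i)) $$ (r,k)" .
qed (use Bi_carrier[OF i] Ai_carrier[OF i] in auto)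

lemma T_of_nonzero_exists: "\<exists>a<d. T_of a \<noteq> 0\<^sub>m d d"
proof (rule ccontr)
  assume "\<not> ?thesis"
  then have T0: "\<And>a. a < d \<Longrightarrow> T_of a = 0\<^sub>m d d" by auto
  have psi0: "word_map l (emat d k 0) = 0\<^sub>m d d" if k: "k < d" for k
  proof (rule eq_matI)
    fix r a assume "r < dim_row (0\<^sub>m d d :: complex mat)" "a < dim_col (0\<^sub>m d d :: complex mat)"
    then have ra: "r < d" "a < d" by auto
    have "T_of a $$ (r,k) = 0" using T0[OF ra(2)] ra k by simp
    then show "word_map l (emat d k 0) $$ (r,a) = 0\<^sub>m d d $$ (r,a)" using ra k by (simp add: T_of_def)
  qed auto
  have "word_map (l+l) (1\<^sub>m d) = msum d (\<lambda>k. 1 \<cdot>\<^sub>m word_map (l+l) (emat d k 0 * emat d 0 k)) {..<d}"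
    by (subst one_emat[OF d], rule word_map_lin) auto
  also have "\<dots> = 0\<^sub>m d d"
    by (rule msum_zero) (simp add: word_map_mult_ge[of l l] psi0)
  finally have "word_map (l+l) (1\<^sub>m d) = 0\<^sub>m d d" .
  moreover have "word_map (l+l) (1\<^sub>m d) = (c_l * c_l) \<cdot>\<^sub>m 1\<^sub>m d"
    using word_map_l_plus_l(1)[of "1\<^sub>m d"] one_l_scalar unfolding one_l_def[symmetric] by (simp add: smult_smult_mat')
  ultimately have "((c_l * c_l) \<cdot>\<^sub>m 1\<^sub>m d :: complex mat) $$ (0,0) = (0\<^sub>m d d :: complex mat) $$ (0,0)" by simp
  then show False using d c_l_nonzero by simp
qed

definition "T_index = (SOME a. a < d \<and> T_of a \<noteq> 0\<^sub>m d d)"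
definition "T = T_of T_index"

lemma T_index: "T_index < d" "T \<noteq> 0\<^sub>m d d"
  using someI_ex[OF T_of_nonzero_exists] unfolding T_index_def[symmetric] T_def by auto

lemma T_carrier[simp]: "T \<in> carrier_mat d d" by (simp add: T_def)
lemma T_dims[simp]: "dim_row T = d" "dim_col T = d" by (simp_all add: T_def)
lemma B_T: "i \<in> {1..N} \<Longrightarrow> B i * T = phase \<cdot>\<^sub>m (T * A i)"
  unfolding T_def using B_T_of T_index(1) by blast

lemma wprod_B_T: "set w \<subseteq> {1..N} \<Longrightarrow> wprod d B w * T = (phase ^ length w) \<cdot>\<^sub>m (T * wprod d A w)"
proof (induction w)
  case Nil then show ?case by simp
next
  case (Cons i w)
  have i: "i \<in> {1..N}" and w: "set w \<subseteq> {1..N}" using Cons.prems by auto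
  have Ai: "A i \<in> carrier_mat d d" and Bi: "B i \<in> carrier_mat d d" using Ai_carrier[OF i] Bi_carrier[OF i] .
  have Aw: "wprod d A w \<in> carrier_mat d d" and Bw: "wprod d B w \<in> carrier_mat d d"
    using square_family_wprod_set[OF A w] square_family_wprod_set[OF B w] .
  have "wprod d B (i # w) * T = B i * (wprod d B w * T)" using Bi Bw by (simp add: assoc_mult_mat[of _ d d _ d _ d])
  also have "\<dots> = B i * ((phase ^ length w) \<cdot>\<^sub>m (T * wprod d A w))" using Cons.IH[OF w] by simp
  also have "\<dots> = (phase ^ length w) \<cdot>\<^sub>m ((B i * T) * wprod d A w)"
    using Bi Aw by (simp add: mult_smult_distrib[of _ d d _ d] assoc_mult_mat[of _ d d _ d _ d])
  also have "\<dots> = (phase ^ length w) \<cdot>\<^sub>m ((phase \<cdot>\<^sub>m (T * A i)) * wprod d A w)" using B_T[OF i] by simp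
  also have "\<dots> = (phase ^ length (i # w)) \<cdot>\<^sub>m (T * wprod d A (i # w))"
    using Ai Aw by (simp add: mult_smult_assoc_mat[of _ d d _ d] smult_smult_mat' mult.commute assoc_mult_mat[of _ d d _ d _ d])
  finally show ?case .
qed

lemma det_T_nonzero: "det T \<noteq> 0"
proof
  assume "det T = 0"
  then obtain R where R: "R \<in> carrier_mat d d" "R \<noteq> 0\<^sub>m d d" and RT: "R * T = 0\<^sub>m d d"
    using det_0_left_annihilator[OF T_carrier] by blast
  have "T = 0\<^sub>m d d"
  proof (rule sandwich_eq_0[OF R(1) T_carrier R(2)])
    fix M :: "complex mat" assume M: "M \<in> carrier_mat d d"
    obtain b where b: "M = word_comb d N B l b" using B_word_comb_exists[OF le_refl M] by blast
    have "R * M * T = R * (word_comb d N B l b * T)" using R b by (simp add: assoc_mult_mat[of _ d d _ d _ d])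
    also have "\<dots> = msum d (\<lambda>w. R * (b w \<cdot>\<^sub>m (wprod d B w * T))) (words N l)"
      using word_comb_mult_right[OF B T_carrier] R B_wprod_carrier by (simp, subst mult_msum[of _ d]) (auto intro!: smult_carrier_mat)
    also have "\<dots> = 0\<^sub>m d d"
    proof (rule msum_zero)
      fix w assume w: "w \<in> words N l"
      have ws: "set w \<subseteq> {1..N}" using w by (simp add: words_def)
      have Aw: "wprod d A w \<in> carrier_mat d d" using A_wprod_carrier[OF w] .
      have "R * (b w \<cdot>\<^sub>m (wprod d B w * T)) = R * (b w \<cdot>\<^sub>m ((phase ^ length w) \<cdot>\<^sub>m (T * wprod d A w)))"
        using wprod_B_T[OF ws] by simp
      also have "\<dots> = (b w * phase ^ length w) \<cdot>\<^sub>m ((R * T) * wprod d A w)"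
        using R Aw by (simp add: smult_smult_mat' mult_smult_distrib[of _ d d _ d] assoc_mult_mat[of _ d d _ d _ d])
      also have "\<dots> = 0\<^sub>m d d" using RT Aw by simp
      finally show "R * (b w \<cdot>\<^sub>m (wprod d B w * T)) = 0\<^sub>m d d" .
    qed
    finally show "R * M * T = 0\<^sub>m d d" .
  qed
  then show False using T_index(2) by simp
qed

lemma T_invertible: "\<exists>Ti. Ti \<in> carrier_mat d d \<and> T * Ti = 1\<^sub>m d \<and> Ti * T = 1\<^sub>m d"
  using det_non_zero_imp_unit[OF T_carrier det_T_nonzero, unfolded Units_def ring_mat_def] by auto

definition "Ti = (SOME Ti. Ti \<in> carrier_mat d d \<and> T * Ti = 1\<^sub>m d \<and> Ti * T = 1\<^sub>m d)"

lemma Ti: "Ti \<in> carrier_mat d d" "T * Ti = 1\<^sub>m d" "Ti * T = 1\<^sub>m d"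
  using someI_ex[OF T_invertible] unfolding Ti_def[symmetric] by auto

definition "trace_factor L = exp (\<i> * of_real (\<alpha> L)) * phase ^ L"

lemma P_eq_trace_factor:
  assumes L: "l \<le> L"
  shows "P = trace_factor L \<cdot>\<^sub>m (Ti * Q * T)"
proof -
  let ?R = "Ti * Q * T"
  have R: "?R \<in> carrier_mat d d" using Ti Q by simp
  have tw: "mtrace ((P - trace_factor L \<cdot>\<^sub>m ?R) * wprod d A w) = 0" if w: "w \<in> words N L" for w
  proof -
    have ws: "set w \<subseteq> {1..N}" and len: "length w = L" using w by (auto simp: words_def)
    have Aw: "wprod d A w \<in> carrier_mat d d" and Bw: "wprod d B w \<in> carrier_mat d d" using A_wprod_carrier[OF w] B_wprod_carrier[OF w] .
    have "mtrace (Q * wprod d B w) = mtrace (Q * wprod d B w * (T * Ti))" using Ti Q Bw by simp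
    also have "\<dots> = mtrace (Q * (wprod d B w * T) * Ti)"
      using Ti Q Bw by (simp add: assoc_mult_mat[of _ d d _ d _ d])
    also have "\<dots> = mtrace ((phase ^ L) \<cdot>\<^sub>m (Q * T * wprod d A w * Ti))"
      using wprod_B_T[OF ws] len Ti Q Aw
      by (simp add: mult_smult_distrib[of _ d d _ d] mult_smult_assoc_mat[of _ d d _ d] assoc_mult_mat[of _ d d _ d _ d])
    also have "\<dots> = phase ^ L * mtrace (Q * T * wprod d A w * Ti)"
      using Ti Q Aw by (simp add: mtrace_smult[of _ d])
    also have "\<dots> = phase ^ L * mtrace (Ti * (Q * T * wprod d A w))"
      using Ti Q Aw by (subst mtrace_mult_comm[of _ d d]) auto
    also have "\<dots> = phase ^ L * mtrace (?R * wprod d A w)"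
      using Ti Q Aw by (simp add: assoc_mult_mat[of _ d d _ d _ d])
    finally have e: "mtrace (Q * wprod d B w) = phase ^ L * mtrace (?R * wprod d A w)" .
    have "mtrace ((P - trace_factor L \<cdot>\<^sub>m ?R) * wprod d A w) = mtrace (P * wprod d A w) - trace_factor L * mtrace (?R * wprod d A w)"
      using P R Aw by (simp add: minus_mult_distrib_mat[of _ d d] mtrace_minus[of _ d] mult_smult_assoc_mat[of _ d d _ d] mtrace_smult[of _ d])
    also have "\<dots> = 0" using tr[OF w] e len by (simp add: trace_factor_def)
    finally show ?thesis .
  qed
  have "P - trace_factor L \<cdot>\<^sub>m ?R = 0\<^sub>m d d"
  proof (rule trace_pairing_nondegenerate)
    show "P - trace_factor L \<cdot>\<^sub>m ?R \<in> carrier_mat d d" using P R by (intro minus_carrier_mat) auto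
    fix M :: "complex mat" assume M: "M \<in> carrier_mat d d"
    obtain a where a: "M = word_comb d N A L a" using A_word_comb_exists[OF L M] by blast
    show "mtrace ((P - trace_factor L \<cdot>\<^sub>m ?R) * M) = 0"
      unfolding a using P R tw by (subst mtrace_word_comb_left[OF A]) (auto intro!: minus_carrier_mat)
  qed
  then have z: "\<And>x y. x < d \<Longrightarrow> y < d \<Longrightarrow> (P - trace_factor L \<cdot>\<^sub>m ?R) $$ (x,y) = 0" by simp
  show ?thesis
  proof (rule eq_matI)
    fix x y assume "x < dim_row (trace_factor L \<cdot>\<^sub>m ?R)" "y < dim_col (trace_factor L \<cdot>\<^sub>m ?R)"
    then have xy: "x < d" "y < d" using R by auto
    have "(P - trace_factor L \<cdot>\<^sub>m ?R) $$ (x,y) = P $$ (x,y) - (trace_factor L \<cdot>\<^sub>m ?R) $$ (x,y)"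
      using xy carrier_matD[OF R] by (intro index_minus_mat(1)) auto
    then show "P $$ (x,y) = (trace_factor L \<cdot>\<^sub>m ?R) $$ (x,y)" using z[OF xy] by simp
  qed (use P R in auto)
qed

text \<open>\<open>P = trace_factor L \<cdot> T\<^sup>-\<^sup>1 Q T\<close> for all \<open>L \<ge> l\<close>, so comparing \<open>L = l\<close> and \<open>L = l + 1\<close> gives \<open>|\<gamma>| = 1\<close>.\<close>

lemma phase_norm: "cmod phase = 1"
proof -
  let ?R = "Ti * Q * T"
  have R: "?R \<in> carrier_mat d d" using Ti Q by simp
  obtain x y where xy: "x < d" "y < d" "P $$ (x,y) \<noteq> 0"
    using P_nonzero P by (metis carrier_matD(1,2) eq_matI index_zero_mat(1,2,3))
  have e1: "P $$ (x,y) = trace_factor l * ?R $$ (x,y)" using P_eq_trace_factor[of l] xy R by (metis carrier_matD(1,2) index_smult_mat(1) le_refl)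
  have e2: "P $$ (x,y) = trace_factor (Suc l) * ?R $$ (x,y)" using P_eq_trace_factor[of "Suc l"] xy R by (metis carrier_matD(1,2) index_smult_mat(1) le_SucI le_refl)
  have Rnz: "?R $$ (x,y) \<noteq> 0" using e1 xy(3) by auto
  have k: "trace_factor l = trace_factor (Suc l)" using e1 e2 Rnz by simp
  have knz: "trace_factor l \<noteq> 0" using e1 xy(3) by auto
  have "cmod (trace_factor l) = cmod phase ^ l" by (simp add: trace_factor_def norm_mult norm_power)
  moreover have "cmod (trace_factor (Suc l)) = cmod phase ^ l * cmod phase" by (simp add: trace_factor_def norm_mult norm_power)
  ultimately have "cmod phase ^ l = cmod phase ^ l * cmod phase" "cmod phase ^ l \<noteq> 0" using k knz by auto
  then show ?thesis by (metis mult_cancel_left1)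
qed

lemma phase_cnj: "phase * cnj phase = 1"
  using phase_norm by (metis complex_norm_square mult.commute of_real_1 power_one)

definition "K = T * adj T"

lemma K_hermitian: "hermitian d K"
  unfolding hermitian_def K_def using T_carrier by (simp add: adj_mult[of _ d d _ d])

lemma K_psd: "psd d K"
  unfolding psd_def
proof
  fix X :: "complex mat" assume X: "X \<in> carrier_mat d d"
  have "adj X * K * X = adj (adj T * X) * (adj T * X)"
    unfolding K_def using X T_carrier by (simp add: adj_mult[of _ d d _ d] assoc_mult_mat[of _ d d _ d _ d])
  then show "0 \<le> Re (mtrace (adj X * K * X))" using mtrace_adj_self_Re[of "adj T * X" d d] X T_carrier by simp
qed

lemma K_fixed: "msum d (\<lambda>i. B i * K * adj (B i)) {1..N} = K"
proof -
  have "msum d (\<lambda>i. B i * K * adj (B i)) {1..N} = msum d (\<lambda>i. T * (A i * adj (A i)) * adj T) {1..N}"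
  proof (rule msum_cong)
    fix i assume i: "i \<in> {1..N}"
    have Ai: "A i \<in> carrier_mat d d" and Bi: "B i \<in> carrier_mat d d" using Ai_carrier[OF i] Bi_carrier[OF i] .
    have "B i * K * adj (B i) = (B i * T) * adj (B i * T)"
      unfolding K_def using Bi T_carrier by (simp add: adj_mult[of _ d d _ d] assoc_mult_mat[of _ d d _ d _ d])
    also have "\<dots> = (phase \<cdot>\<^sub>m (T * A i)) * (cnj phase \<cdot>\<^sub>m adj (T * A i))" using B_T[OF i] by (simp add: adj_smult)
    also have "\<dots> = (phase * cnj phase) \<cdot>\<^sub>m ((T * A i) * adj (T * A i))"
      using Ai T_carrier by (simp add: mult_smult_assoc_mat[of _ d d _ d] mult_smult_distrib[of _ d d _ d] smult_smult_mat' mult.commute[of "cnj phase" phase])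
    also have "\<dots> = T * (A i * adj (A i)) * adj T"
      using Ai T_carrier phase_cnj by (simp add: adj_mult[of _ d d _ d] assoc_mult_mat[of _ d d _ d _ d])
    finally show "B i * K * adj (B i) = T * (A i * adj (A i)) * adj T" .
  qed
  also have "\<dots> = T * msum d (\<lambda>i. A i * adj (A i)) {1..N} * adj T"
    using Ai_carrier T_carrier by (simp add: mult_msum[of _ d] msum_mult[of _ d])
  also have "\<dots> = K" using canA unfolding K_def by simp
  finally show ?thesis .
qed

lemma K_positive_scalar: "\<exists>c0>0. K = of_real c0 \<cdot>\<^sub>m 1\<^sub>m d"
proof -
  obtain c0 :: real where c0: "K = of_real c0 \<cdot>\<^sub>m 1\<^sub>m d"
    using channel_fixed_point_scalar[OF d B spB canB K_hermitian K_psd K_fixed] by blast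
  have trK: "mtrace K = of_real c0 * of_nat d" using c0 by (simp add: mtrace_smult[of _ d])
  have "mtrace K = mtrace (adj (adj T) * adj T)" unfolding K_def by simp
  moreover have "mtrace (adj (adj T) * adj T) \<noteq> 0"
  proof
    assume "mtrace (adj (adj T) * adj T) = 0"
    then have "adj T = 0\<^sub>m d d" using mtrace_adj_self_zero[of "adj T" d d] T_carrier by simp
    then have "adj (adj T) = 0\<^sub>m d d" by simp
    then show False using T_index(2) by simp
  qed
  moreover have "Re (mtrace (adj (adj T) * adj T)) \<ge> 0" "Im (mtrace (adj (adj T) * adj T)) = 0"
    using mtrace_adj_self_Re[of "adj T" d d] T_carrier by auto
  ultimately have "Re (mtrace K) \<ge> 0" "mtrace K \<noteq> 0" by auto
  then have "c0 > 0"
  proof -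
    assume a: "Re (mtrace K) \<ge> 0" "mtrace K \<noteq> 0"
    have "Re (mtrace K) = c0 * real d" using trK by simp
    moreover have "c0 \<noteq> 0" using trK a(2) by auto
    ultimately show ?thesis using a(1) d by (simp add: zero_le_mult_iff)
  qed
  then show ?thesis using c0 by blast
qed

lemma gauge_transform_exists: "\<exists>V \<beta>. unitary_mat d V \<and> (\<forall>i\<in>{1..N}. B i = exp (\<i> * of_real \<beta>) \<cdot>\<^sub>m (adj V * A i * V))"
proof -
  obtain c0 :: real where c0p: "c0 > 0" and c0: "K = of_real c0 \<cdot>\<^sub>m 1\<^sub>m d"
    using K_positive_scalar by blast
  define s where "s = 1 / sqrt c0"
  have s2: "s * (s * c0) = 1" using c0p unfolding s_def by (simp add: field_simps)
  have s3: "s * c0 * s = 1" using s2 by (metis mult.commute mult.assoc)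
  define V where "V = of_real s \<cdot>\<^sub>m adj T"
  have Vc: "V \<in> carrier_mat d d" unfolding V_def by simp
  have aV: "adj V = of_real s \<cdot>\<^sub>m T" unfolding V_def by (simp add: adj_smult)
  have TT: "T * adj T = of_real c0 \<cdot>\<^sub>m 1\<^sub>m d" using c0 unfolding K_def .
  have aT: "adj T = of_real c0 \<cdot>\<^sub>m Ti"
  proof -
    have "Ti * (T * adj T) = adj T" using Ti T_carrier by (simp add: assoc_mult_mat[of _ d d _ d _ d, symmetric])
    moreover have "Ti * (T * adj T) = of_real c0 \<cdot>\<^sub>m Ti" using TT Ti by simp
    ultimately show ?thesis by simp
  qed
  have TaT: "adj T * T = of_real c0 \<cdot>\<^sub>m 1\<^sub>m d"
    using aT Ti by (simp add: mult_smult_assoc_mat[of _ d d _ d])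
  have u1: "adj V * V = 1\<^sub>m d"
    unfolding aV unfolding V_def using TT T_carrier s2
    by (simp add: mult_smult_assoc_mat[of _ d d _ d] mult_smult_distrib[of _ d d _ d] smult_smult_mat')
      (simp add: of_real_mult[symmetric] del: of_real_mult)
  have u2: "V * adj V = 1\<^sub>m d"
    unfolding aV unfolding V_def using TaT T_carrier s2
    by (simp add: mult_smult_assoc_mat[of _ d d _ d] mult_smult_distrib[of _ d d _ d] smult_smult_mat')
      (simp add: of_real_mult[symmetric] del: of_real_mult)
  have Bi: "B i = phase \<cdot>\<^sub>m (adj V * A i * V)" if i: "i \<in> {1..N}" for i
  proof -
    have Ai: "A i \<in> carrier_mat d d" and Bic: "B i \<in> carrier_mat d d" using Ai_carrier[OF i] Bi_carrier[OF i] .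
    have "B i = B i * T * Ti" using Bic Ti by (simp add: assoc_mult_mat[of _ d d _ d _ d])
    also have "\<dots> = phase \<cdot>\<^sub>m (T * A i * Ti)" using B_T[OF i] Ai Ti by (simp add: mult_smult_assoc_mat[of _ d d _ d])
    also have "T * A i * Ti = adj V * A i * V"
      unfolding aV unfolding V_def aT using Ai Ti s3
      by (simp add: mult_smult_assoc_mat[of _ d d _ d] mult_smult_distrib[of _ d d _ d] smult_smult_mat')
        (simp add: of_real_mult[symmetric] del: of_real_mult)
    finally show ?thesis .
  qed
  show ?thesis
  proof (intro exI[of _ V] exI[of _ "Arg phase"] conjI ballI)
    show "unitary_mat d V" unfolding unitary_mat_def using Vc u1 u2 by simp
    fix i assume "i \<in> {1..N}"
    then show "B i = exp (\<i> * of_real (Arg phase)) \<cdot>\<^sub>m (adj V * A i * V)"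
      using Bi exp_Arg[OF phase_norm] by simp
  qed
qed

end

section \<open>Gauge transformations, grading and Wall matrices\<close>

lemma sigmaz_tensor_id_square: "sigmaz_tensor_id n * sigmaz_tensor_id n = 1\<^sub>m (2*n)"
proof (rule eq_matI)
  fix i j assume "i < dim_row (1\<^sub>m (2*n) :: complex mat)" "j < dim_col (1\<^sub>m (2*n) :: complex mat)"
  then have ij: "i < 2*n" "j < 2*n" by auto
  have "(sigmaz_tensor_id n * sigmaz_tensor_id n) $$ (i,j)
      = (\<Sum>t<2*n. (if i = t then (if i < n then 1 else -1) else 0) * (if t = j then (if t < n then 1 else -1) else 0))"
    using ij by (simp add: sigmaz_tensor_id_def scalar_prod_def lessThan_atLeast0)
  also have "\<dots> = (\<Sum>t<2*n. if t = i then (if i = j then 1 else 0) else (0::complex))"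
    by (intro sum.cong) auto
  also have "\<dots> = 1\<^sub>m (2*n) $$ (i,j)" using ij by simp
  finally show "(sigmaz_tensor_id n * sigmaz_tensor_id n) $$ (i,j) = 1\<^sub>m (2*n) $$ (i,j)" .
qed (auto simp: sigmaz_tensor_id_def)

lemma sigmaz_tensor_id_carrier[simp]: "sigmaz_tensor_id n \<in> carrier_mat (2*n) (2*n)"
  by (simp add: sigmaz_tensor_id_def)

lemma grading_matrix_square:
  assumes "grading_matrix N n par A Z"
  shows "Z \<in> carrier_mat (2*n) (2*n)" "Z * Z = 1\<^sub>m (2*n)"
proof -
  show Zc: "Z \<in> carrier_mat (2*n) (2*n)" using assms by (simp add: grading_matrix_def)
  obtain U where U: "unitary_mat (2*n) U" "Z = U * sigmaz_tensor_id n * adj U"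
    using assms unfolding grading_matrix_def by blast
  note Ud = unitaryD[OF U(1)]
  let ?s = "sigmaz_tensor_id n"
  have sc: "?s * (?s * X) = X" if "X \<in> carrier_mat (2*n) (2*n)" for X
    using that sigmaz_tensor_id_square by (simp add: assoc_mult_mat[of _ "2*n" "2*n" _ "2*n" _ "2*n", symmetric])
  have "Z * Z = U * (?s * (adj U * (U * (?s * adj U))))"
    unfolding U(2) using Ud by (simp add: assoc_mult_mat[of _ "2*n" "2*n" _ "2*n" _ "2*n"])
  also have "\<dots> = U * (?s * (?s * adj U))"
    using Ud unitary_cancel(2)[OF U(1), of "?s * adj U" "2*n"] by simp
  also have "\<dots> = 1\<^sub>m (2*n)" using Ud sc[of "adj U"] by simp
  finally show "Z * Z = 1\<^sub>m (2*n)" .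
qed

lemma wall_matrix_sign:
  assumes "wall_matrix N n par A u"
  shows "\<exists>Z \<sigma>. grading_matrix N n par A Z \<and> \<sigma> \<in> {1, -1::complex} \<and> u = \<sigma> \<cdot>\<^sub>m Z"
proof -
  obtain Z where Z: "grading_matrix N n par A Z" "u = Z \<or> u = - Z" using assms unfolding wall_matrix_def by blast
  show ?thesis
  proof (cases "u = Z")
    case True then show ?thesis using Z(1) by (intro exI[of _ Z] exI[of _ 1]) auto
  next
    case False then have "u = (-1) \<cdot>\<^sub>m Z" using Z(2) neg_eq_smult by auto
    then show ?thesis using Z(1) by (intro exI[of _ Z] exI[of _ "-1"]) auto
  qed
qed

lemma wall_matrix_square:
  assumes "wall_matrix N n par A u"
  shows "u \<in> carrier_mat (2*n) (2*n)" "u * u = 1\<^sub>m (2*n)"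
proof -
  obtain Z \<sigma> where Z: "grading_matrix N n par A Z" "\<sigma> \<in> {1, -1}" "u = \<sigma> \<cdot>\<^sub>m Z"
    using wall_matrix_sign[OF assms] by blast
  note G = grading_matrix_square[OF Z(1)]
  show "u \<in> carrier_mat (2*n) (2*n)" using Z(3) G by simp
  have "u * u = (\<sigma> * \<sigma>) \<cdot>\<^sub>m (Z * Z)"
    using Z(3) G by (simp add: mult_smult_assoc_mat[of _ "2*n" "2*n" _ "2*n"] mult_smult_distrib[of _ "2*n" "2*n" _ "2*n"] smult_smult_mat')
  then show "u * u = 1\<^sub>m (2*n)" using Z(2) G by auto
qed

lemma gauge_transform_wprod:
  assumes gt: "gauge_transform N n A B V \<beta>" and A: "square_family (2*n) N A" and w: "set w \<subseteq> {1..N}"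
  shows "wprod (2*n) B w = (exp (\<i> * of_real \<beta>) ^ length w) \<cdot>\<^sub>m (adj V * wprod (2*n) A w * V)"
  using w
proof (induction w)
  case Nil
  have V: "unitary_mat (2*n) V" using gt by (simp add: gauge_transform_def)
  then show ?case using unitaryD[OF V] by simp
next
  case (Cons i w)
  have i: "i \<in> {1..N}" and ws: "set w \<subseteq> {1..N}" using Cons.prems by auto
  have V: "unitary_mat (2*n) V" and Bi: "B i = exp (\<i> * of_real \<beta>) \<cdot>\<^sub>m (adj V * A i * V)"
    using gt i by (auto simp: gauge_transform_def)
  note Vd = unitaryD[OF V]
  have Ai: "A i \<in> carrier_mat (2*n) (2*n)" using A i by (auto simp: square_family_def)
  have Aw: "wprod (2*n) A w \<in> carrier_mat (2*n) (2*n)" using square_family_wprod_set[OF A ws] .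
  let ?e = "exp (\<i> * of_real \<beta>)"
  have "wprod (2*n) B (i # w) = (?e \<cdot>\<^sub>m (adj V * A i * V)) * ((?e ^ length w) \<cdot>\<^sub>m (adj V * wprod (2*n) A w * V))"
    using Cons.IH[OF ws] Bi by simp
  also have "\<dots> = (?e ^ length w * ?e) \<cdot>\<^sub>m (adj V * (A i * (V * (adj V * (wprod (2*n) A w * V)))))"
    using Vd Ai Aw
    by (simp add: mult_smult_assoc_mat[of _ "2*n" "2*n" _ "2*n"] mult_smult_distrib[of _ "2*n" "2*n" _ "2*n"]
        smult_smult_mat' assoc_mult_mat[of _ "2*n" "2*n" _ "2*n" _ "2*n"])
  also have "V * (adj V * (wprod (2*n) A w * V)) = wprod (2*n) A w * V"
    using unitary_cancel(1)[OF V, of "wprod (2*n) A w * V" "2*n"] Aw Vd by simp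
  finally show ?case
    using Vd Ai Aw by (simp add: assoc_mult_mat[of _ "2*n" "2*n" _ "2*n" _ "2*n"] power_Suc2 del: power_Suc)
qed

lemma exp_phase_cancel: "exp (\<i> * of_real (- (\<beta> * real L))) * exp (\<i> * of_real \<beta>) ^ L = 1"
proof -
  have "exp (\<i> * of_real \<beta>) ^ L = exp (of_nat L * (\<i> * of_real \<beta>))" by (rule exp_of_nat_mult[symmetric])
  then show ?thesis by (simp add: mult_exp_exp[symmetric] algebra_simps exp_minus_inverse del: mult_exp_exp)
qed

lemma grading_matrix_commute:
  assumes G: "grading_matrix N n par A Z" and i: "i \<in> {1..N}" and Ai: "A i \<in> carrier_mat (2*n) (2*n)"
  shows "Z * A i = (-1) ^ par i \<cdot>\<^sub>m (A i * Z)"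
proof -
  note Zd = grading_matrix_square[OF G]
  have par: "(-1) ^ par i \<cdot>\<^sub>m A i = Z * A i * Z" using G i unfolding grading_matrix_def by blast
  have "(-1) ^ par i \<cdot>\<^sub>m (A i * Z) = ((-1) ^ par i \<cdot>\<^sub>m A i) * Z"
    using Ai Zd by (simp add: mult_smult_assoc_mat[of _ "2*n" "2*n" _ "2*n"])
  also have "\<dots> = Z * A i * (Z * Z)" unfolding par using Ai Zd by (simp add: assoc_mult_mat[of _ "2*n" "2*n" _ "2*n" _ "2*n"])
  also have "\<dots> = Z * A i" using Ai Zd by simp
  finally show ?thesis by simp
qed

lemma gauge_transform_mtrace:
  assumes gt: "gauge_transform N n A B V \<beta>" and A: "square_family (2*n) N A"
    and w: "set w \<subseteq> {1..N}" and Z: "Z \<in> carrier_mat (2*n) (2*n)"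
  shows "mtrace (adj V * Z * V * wprod (2*n) B w) = exp (\<i> * of_real \<beta>) ^ length w * mtrace (Z * wprod (2*n) A w)"
proof -
  let ?d = "2*n" and ?e = "exp (\<i> * of_real \<beta>)"
  have V: "unitary_mat ?d V" using gt by (simp add: gauge_transform_def)
  note Vd = unitaryD[OF V]
  have Aw: "wprod ?d A w \<in> carrier_mat ?d ?d" using square_family_wprod_set[OF A w] .
  have "adj V * Z * V * wprod ?d B w = (?e ^ length w) \<cdot>\<^sub>m (adj V * (Z * (V * (adj V * (wprod ?d A w * V)))))"
    unfolding gauge_transform_wprod[OF gt A w] using Vd Z Aw
    by (simp add: mult_smult_distrib[of _ ?d ?d _ ?d] assoc_mult_mat[of _ ?d ?d _ ?d _ ?d])
  also have "V * (adj V * (wprod ?d A w * V)) = wprod ?d A w * V"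
    using unitary_cancel(1)[OF V, of "wprod ?d A w * V" ?d] Aw Vd by simp
  also have "adj V * (Z * (wprod ?d A w * V)) = adj V * (Z * wprod ?d A w) * V"
    using Vd Z Aw by (simp add: assoc_mult_mat[of _ ?d ?d _ ?d _ ?d])
  finally show ?thesis
    using mtrace_unitary_conj[OF V, of "Z * wprod ?d A w"] Z Aw Vd by (simp add: mtrace_smult[of _ ?d])
qed

lemma gauge_transform_imp_gauge_equiv:
  assumes gt: "gauge_transform N n A B V \<beta>" and A: "square_family (2*n) N A"
  shows "gauge_equiv N n A B"
  unfolding gauge_equiv_def
proof
  fix L :: nat
  show "\<exists>\<alpha>::real. \<forall>w\<in>words N L. mtrace (wprod (2*n) A w) = exp (\<i> * of_real \<alpha>) * mtrace (wprod (2*n) B w)"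
  proof (intro exI[of _ "- (\<beta> * real L)"] ballI)
    fix w assume w: "w \<in> words N L"
    have ws: "set w \<subseteq> {1..N}" and len: "length w = L" using w by (auto simp: words_def)
    have V: "unitary_mat (2*n) V" using gt by (simp add: gauge_transform_def)
    have Aw: "wprod (2*n) A w \<in> carrier_mat (2*n) (2*n)" using square_family_wprod_set[OF A ws] .
    have Bw: "wprod (2*n) B w \<in> carrier_mat (2*n) (2*n)"
      using gauge_transform_wprod[OF gt A ws] Aw unitaryD[OF V] by simp
    have "adj V * 1\<^sub>m (2*n) * V = 1\<^sub>m (2*n)" using unitaryD[OF V] by simp
    then have "mtrace (wprod (2*n) B w) = exp (\<i> * of_real \<beta>) ^ L * mtrace (wprod (2*n) A w)"
      using gauge_transform_mtrace[OF gt A ws, of "1\<^sub>m (2*n)"] len Aw Bw by simp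
    then show "mtrace (wprod (2*n) A w) = exp (\<i> * of_real (- (\<beta> * real L))) * mtrace (wprod (2*n) B w)"
      using exp_phase_cancel[of \<beta> L] by (simp add: mult.assoc[symmetric])
  qed
qed

lemma gauge_transform_grading_matrix:
  assumes gt: "gauge_transform N n A B V \<beta>" and A: "square_family (2*n) N A"
    and Z: "grading_matrix N n par A Z"
  shows "grading_matrix N n par B (adj V * Z * V)"
  unfolding grading_matrix_def
proof (intro conjI ballI)
  let ?d = "2*n" and ?e = "exp (\<i> * of_real \<beta>)"
  obtain U where U: "unitary_mat ?d U" "Z = U * sigmaz_tensor_id n * adj U"
    using Z unfolding grading_matrix_def by blast
  have V: "unitary_mat ?d V" using gt by (simp add: gauge_transform_def)
  note Vd = unitaryD[OF V] and Ud = unitaryD[OF U(1)]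
  have Zc: "Z \<in> carrier_mat ?d ?d" using grading_matrix_square[OF Z] by simp
  have Bi: "\<And>i. i \<in> {1..N} \<Longrightarrow> B i = ?e \<cdot>\<^sub>m (adj V * A i * V)" using gt by (simp add: gauge_transform_def)
  have Ai: "\<And>i. i \<in> {1..N} \<Longrightarrow> A i \<in> carrier_mat ?d ?d" using A by (simp add: square_family_def)
  show "adj V * Z * V \<in> carrier_mat ?d ?d" using Vd Zc by simp
  show "\<exists>U. unitary_mat ?d U \<and> adj V * Z * V = U * sigmaz_tensor_id n * adj U"
  proof (intro exI[of _ "adj V * U"] conjI)
    show "unitary_mat ?d (adj V * U)" by (rule unitary_adj_mult[OF V U(1)])
    show "adj V * Z * V = adj V * U * sigmaz_tensor_id n * adj (adj V * U)"
      unfolding U(2) using Vd Ud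
      by (simp add: adj_mult[of _ ?d ?d _ ?d] assoc_mult_mat[of _ ?d ?d _ ?d _ ?d])
  qed
  fix i assume i: "i \<in> {1..N}"
  have par: "(-1) ^ par i \<cdot>\<^sub>m A i = Z * A i * Z" using Z i unfolding grading_matrix_def by blast
  have "adj V * Z * V * B i * (adj V * Z * V)
      = ?e \<cdot>\<^sub>m (adj V * (Z * (V * (adj V * (A i * (V * (adj V * (Z * V))))))))"
    unfolding Bi[OF i] using Vd Zc Ai[OF i]
    by (simp add: mult_smult_assoc_mat[of _ ?d ?d _ ?d] mult_smult_distrib[of _ ?d ?d _ ?d] assoc_mult_mat[of _ ?d ?d _ ?d _ ?d])
  also have "V * (adj V * (Z * V)) = Z * V" using unitary_cancel(1)[OF V, of "Z * V" ?d] Zc Vd by simp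
  also have "V * (adj V * (A i * (Z * V))) = A i * (Z * V)"
    using unitary_cancel(1)[OF V, of "A i * (Z * V)" ?d] Zc Vd Ai[OF i] by simp
  also have "adj V * (Z * (A i * (Z * V))) = adj V * (Z * A i * Z) * V"
    using Vd Zc Ai[OF i] by (simp add: assoc_mult_mat[of _ ?d ?d _ ?d _ ?d])
  also have "\<dots> = (-1) ^ par i \<cdot>\<^sub>m (adj V * A i * V)"
    unfolding par[symmetric] using Vd Ai[OF i]
    by (simp add: mult_smult_assoc_mat[of _ ?d ?d _ ?d] mult_smult_distrib[of _ ?d ?d _ ?d])
  finally show "(-1) ^ par i \<cdot>\<^sub>m B i = adj V * Z * V * B i * (adj V * Z * V)"
    unfolding Bi[OF i] by (simp add: smult_smult_mat' mult.commute)
qed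

lemma gauge_transform_imp_gauge_equiv_PBC:
  assumes gt: "gauge_transform N n A B V \<beta>" and A: "square_family (2*n) N A" and F: "fMPS N n par A"
  shows "gauge_equiv_PBC N n par A B"
proof -
  obtain Z where Z: "grading_matrix N n par A Z" using F unfolding fMPS_def by blast
  have Zc: "Z \<in> carrier_mat (2*n) (2*n)" using grading_matrix_square[OF Z] by simp
  have "wall_matrix N n par A Z" "wall_matrix N n par B (adj V * Z * V)"
    unfolding wall_matrix_def using Z gauge_transform_grading_matrix[OF gt A Z] by blast+
  moreover have "\<exists>\<alpha>::real. \<forall>w\<in>words N L.
      mtrace (Z * wprod (2*n) A w) = exp (\<i> * of_real \<alpha>) * mtrace (adj V * Z * V * wprod (2*n) B w)" for L
  proof (intro exI[of _ "- (\<beta> * real L)"] ballI)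
    fix w assume w: "w \<in> words N L"
    have ws: "set w \<subseteq> {1..N}" and len: "length w = L" using w by (auto simp: words_def)
    show "mtrace (Z * wprod (2*n) A w) = exp (\<i> * of_real (- (\<beta> * real L))) * mtrace (adj V * Z * V * wprod (2*n) B w)"
      using gauge_transform_mtrace[OF gt A ws Zc] len exp_phase_cancel[of \<beta> L] by (simp add: mult.assoc[symmetric])
  qed
  ultimately show ?thesis unfolding gauge_equiv_PBC_def by blast
qed

lemma gauge_transforms_twisted_commute:
  assumes A: "square_family (2*n) N A" and i: "i \<in> {1..N}"
    and g1: "gauge_transform N n A B V \<beta>" and g2: "gauge_transform N n A B V' \<beta>'"
  shows "A i * (V * adj V') = (exp (\<i> * of_real \<beta>') / exp (\<i> * of_real \<beta>)) \<cdot>\<^sub>m ((V * adj V') * A i)"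
proof -
  let ?d = "2*n" and ?e = "exp (\<i> * of_real \<beta>)" and ?e' = "exp (\<i> * of_real \<beta>')"
  have V: "unitary_mat ?d V" and V': "unitary_mat ?d V'" using g1 g2 by (auto simp: gauge_transform_def)
  note Vd = unitaryD[OF V] and V'd = unitaryD[OF V']
  have Ai: "A i \<in> carrier_mat ?d ?d" using A i by (simp add: square_family_def)
  have eq: "?e \<cdot>\<^sub>m (adj V * A i * V) = ?e' \<cdot>\<^sub>m (adj V' * A i * V')"
    using g1 g2 i unfolding gauge_transform_def by metis
  have "V * (?e \<cdot>\<^sub>m (adj V * A i * V)) * adj V' = ?e \<cdot>\<^sub>m (V * (adj V * (A i * (V * adj V'))))"
    using Vd V'd Ai by (simp add: mult_smult_assoc_mat[of _ ?d ?d _ ?d] mult_smult_distrib[of _ ?d ?d _ ?d] assoc_mult_mat[of _ ?d ?d _ ?d _ ?d])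
  moreover have "V * (adj V * (A i * (V * adj V'))) = A i * (V * adj V')"
    using unitary_cancel(1)[OF V, of "A i * (V * adj V')" ?d] Vd V'd Ai by simp
  moreover have "V * (?e' \<cdot>\<^sub>m (adj V' * A i * V')) * adj V' = ?e' \<cdot>\<^sub>m (V * (adj V' * (A i * (V' * adj V'))))"
    using Vd V'd Ai by (simp add: mult_smult_assoc_mat[of _ ?d ?d _ ?d] mult_smult_distrib[of _ ?d ?d _ ?d] assoc_mult_mat[of _ ?d ?d _ ?d _ ?d])
  moreover have "V * (adj V' * (A i * (V' * adj V'))) = (V * adj V') * A i"
    using Vd V'd Ai by (simp add: assoc_mult_mat[of _ ?d ?d _ ?d _ ?d])
  ultimately have "?e \<cdot>\<^sub>m (A i * (V * adj V')) = ?e' \<cdot>\<^sub>m ((V * adj V') * A i)" using eq by simp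
  then have "(1 / ?e) \<cdot>\<^sub>m (?e \<cdot>\<^sub>m (A i * (V * adj V'))) = (1 / ?e) \<cdot>\<^sub>m (?e' \<cdot>\<^sub>m ((V * adj V') * A i))" by simp
  then show ?thesis by (simp add: smult_smult_mat')
qed

lemma gauge_transform_unique:
  assumes d: "0 < 2*n" and A: "square_family (2*n) N A" and sp: "words_span (2*n) N A L" and L: "0 < L"
    and g1: "gauge_transform N n A B V \<beta>" and g2: "gauge_transform N n A B V' \<beta>'"
  shows "exp (\<i> * of_real \<beta>) = exp (\<i> * of_real \<beta>') \<and> (\<exists>\<theta>::real. V' = exp (\<i> * of_real \<theta>) \<cdot>\<^sub>m V)"
proof -
  let ?d = "2*n" and ?e = "exp (\<i> * of_real \<beta>)" and ?e' = "exp (\<i> * of_real \<beta>')"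
  have V: "unitary_mat ?d V" and V': "unitary_mat ?d V'" using g1 g2 by (auto simp: gauge_transform_def)
  note Vd = unitaryD[OF V] and V'd = unitaryD[OF V']
  define W where "W = V * adj V'"
  have Wc: "W \<in> carrier_mat ?d ?d" unfolding W_def using Vd V'd by simp
  have WW: "W * adj W = 1\<^sub>m ?d"
  proof -
    have "W * adj W = V * (adj V' * (V' * adj V))"
      unfolding W_def using Vd V'd by (simp add: adj_mult[of _ ?d ?d _ ?d] assoc_mult_mat[of _ ?d ?d _ ?d _ ?d])
    also have "\<dots> = 1\<^sub>m ?d" using unitary_cancel(2)[OF V', of "adj V" ?d] Vd by simp
    finally show ?thesis .
  qed
  have W0: "W \<noteq> 0\<^sub>m ?d ?d"
  proof
    assume "W = 0\<^sub>m ?d ?d"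
    then have "(1\<^sub>m ?d :: complex mat) $$ (0,0) = (0\<^sub>m ?d ?d * adj (0\<^sub>m ?d ?d :: complex mat)) $$ (0,0)" using WW by simp
    then show False using d by simp
  qed
  have enz: "?e \<noteq> 0" by simp
  define \<omega> where "\<omega> = ?e' / ?e"
  have tw: "A i * W = \<omega> \<cdot>\<^sub>m (W * A i)" if "i \<in> {1..N}" for i
    unfolding W_def \<omega>_def by (rule gauge_transforms_twisted_commute[OF A that g1 g2])
  define s where "s = W $$ (0,0)"
  have Wsc: "W = s \<cdot>\<^sub>m 1\<^sub>m ?d"
    unfolding s_def by (rule twisted_commutant_scalar(2)[OF d A sp L Wc W0 tw])
  have "\<omega> = 1" by (rule twisted_commutant_scalar(1)[OF d A sp L Wc W0 tw])
  then have ee: "?e = ?e'" unfolding \<omega>_def using enz by (simp add: field_simps)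
  have ss: "s * cnj s = 1"
  proof -
    have "W * adj W = (s * cnj s) \<cdot>\<^sub>m 1\<^sub>m ?d" using Wsc by (simp add: adj_smult smult_smult_mat' mult.commute[of "cnj s" s])
    then have "((s * cnj s) \<cdot>\<^sub>m 1\<^sub>m ?d :: complex mat) $$ (0,0) = (1\<^sub>m ?d :: complex mat) $$ (0,0)" using WW by simp
    then show ?thesis using d by simp
  qed
  have "W * V' = V" unfolding W_def using Vd V'd by (simp add: assoc_mult_mat[of _ ?d ?d _ ?d _ ?d])
  then have "V = s \<cdot>\<^sub>m V'" using Wsc V'd by simp
  then have "V' = cnj s \<cdot>\<^sub>m V" using ss by (simp add: smult_smult_mat' mult.commute)
  moreover have "cmod (cnj s) = 1"
  proof -
    have "(cmod s)\<^sup>2 = 1" using ss complex_mod_mult_cnj[of s] by (metis norm_one power2_eq_square)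
    then show ?thesis using norm_ge_zero[of s] by (auto simp: power2_eq_1_iff)
  qed
  ultimately have "V' = exp (\<i> * of_real (Arg (cnj s))) \<cdot>\<^sub>m V" using exp_Arg by simp
  then show ?thesis using ee by blast
qed

lemma grading_matrix_unique:
  assumes d: "0 < 2*n" and B: "square_family (2*n) N B" and sp: "words_span (2*n) N B L" and L: "0 < L"
    and Z1: "grading_matrix N n par B Z1" and Z2: "grading_matrix N n par B Z2"
  shows "\<exists>s\<in>{1, -1}. Z1 = s \<cdot>\<^sub>m Z2"
proof -
  let ?d = "2*n"
  note Z1d = grading_matrix_square[OF Z1] and Z2d = grading_matrix_square[OF Z2]
  have Bi: "\<And>i. i \<in> {1..N} \<Longrightarrow> B i \<in> carrier_mat ?d ?d" using B by (simp add: square_family_def)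
  define X where "X = Z1 * Z2"
  have Xc: "X \<in> carrier_mat ?d ?d" unfolding X_def using Z1d Z2d by simp
  have XZ2: "X * Z2 = Z1" unfolding X_def using Z1d Z2d by (simp add: assoc_mult_mat[of _ ?d ?d _ ?d _ ?d])
  have X0: "X \<noteq> 0\<^sub>m ?d ?d"
  proof
    assume "X = 0\<^sub>m ?d ?d"
    then have "Z1 = 0\<^sub>m ?d ?d" using XZ2 Z2d by auto
    then have "(1\<^sub>m ?d :: complex mat) $$ (0,0) = (0\<^sub>m ?d ?d * 0\<^sub>m ?d ?d :: complex mat) $$ (0,0)"
      using Z1d by simp
    then show False using d by simp
  qed
  have tw: "B i * X = 1 \<cdot>\<^sub>m (X * B i)" if i: "i \<in> {1..N}" for i
  proof -
    have pp: "((-1::complex) ^ par i) * ((-1) ^ par i) = 1" by (simp add: power_mult_distrib[symmetric])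
    have "X * B i = Z1 * (Z2 * B i)" unfolding X_def using Z1d Z2d Bi[OF i] by (simp add: assoc_mult_mat[of _ ?d ?d _ ?d _ ?d])
    also have "\<dots> = (-1) ^ par i \<cdot>\<^sub>m ((Z1 * B i) * Z2)"
      unfolding grading_matrix_commute[OF Z2 i Bi[OF i]] using Z1d Z2d Bi[OF i]
      by (simp add: mult_smult_distrib[of _ ?d ?d _ ?d] assoc_mult_mat[of _ ?d ?d _ ?d _ ?d])
    also have "\<dots> = B i * X"
      unfolding grading_matrix_commute[OF Z1 i Bi[OF i]] X_def using Z1d Z2d Bi[OF i] pp
      by (simp add: mult_smult_assoc_mat[of _ ?d ?d _ ?d] smult_smult_mat' assoc_mult_mat[of _ ?d ?d _ ?d _ ?d])
    finally show ?thesis by simp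
  qed
  define s where "s = X $$ (0,0)"
  have "X = s \<cdot>\<^sub>m 1\<^sub>m ?d" unfolding s_def by (rule twisted_commutant_scalar(2)[OF d B sp L Xc X0 tw])
  then have Zs: "Z1 = s \<cdot>\<^sub>m Z2" using XZ2 Z2d by simp
  have "(s * s) \<cdot>\<^sub>m 1\<^sub>m ?d = 1\<^sub>m ?d"
  proof -
    have "Z1 * Z1 = (s * s) \<cdot>\<^sub>m (Z2 * Z2)" unfolding Zs using Z2d
      by (simp add: mult_smult_assoc_mat[of _ ?d ?d _ ?d] mult_smult_distrib[of _ ?d ?d _ ?d] smult_smult_mat')
    then show ?thesis using Z1d Z2d by simp
  qed
  then have "((s * s) \<cdot>\<^sub>m 1\<^sub>m ?d :: complex mat) $$ (0,0) = (1\<^sub>m ?d :: complex mat) $$ (0,0)" by (rule arg_cong)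
  then have "s * s = 1" using d by simp
  then have "s \<in> {1, -1}" by (metis insertCI power2_eq_1_iff power2_eq_square singleton_iff)
  then show ?thesis using Zs by blast
qed

lemma gauge_transform_wall_matrix:
  assumes d: "0 < 2*n" and B: "square_family (2*n) N B" and sp: "words_span (2*n) N B L" and L: "0 < L"
    and A: "square_family (2*n) N A" and gt: "gauge_transform N n A B V \<beta>"
    and wu: "wall_matrix N n par A u" and wv: "wall_matrix N n par B v"
  shows "\<exists>\<eta>::complex. \<eta> \<in> {1, -1} \<and> v = \<eta> \<cdot>\<^sub>m (adj V * u * V)"
proof -
  let ?d = "2*n"
  obtain ZA \<sigma>u where ZA: "grading_matrix N n par A ZA" "\<sigma>u \<in> {1,-1}" "u = \<sigma>u \<cdot>\<^sub>m ZA"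
    using wall_matrix_sign[OF wu] by blast
  obtain ZB \<sigma>v where ZB: "grading_matrix N n par B ZB" "\<sigma>v \<in> {1,-1}" "v = \<sigma>v \<cdot>\<^sub>m ZB"
    using wall_matrix_sign[OF wv] by blast
  obtain s where s: "s \<in> {1, -1}" "ZB = s \<cdot>\<^sub>m (adj V * ZA * V)"
    using grading_matrix_unique[OF d B sp L ZB(1) gauge_transform_grading_matrix[OF gt A ZA(1)]] by blast
  have V: "unitary_mat ?d V" using gt by (simp add: gauge_transform_def)
  note Vd = unitaryD[OF V] and ZAd = grading_matrix_square[OF ZA(1)]
  have uZ: "adj V * u * V = \<sigma>u \<cdot>\<^sub>m (adj V * ZA * V)"
    unfolding ZA(3) using Vd ZAd by (simp add: mult_smult_assoc_mat[of _ ?d ?d _ ?d] mult_smult_distrib[of _ ?d ?d _ ?d])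
  have su: "\<sigma>u * \<sigma>u = 1" using ZA(2) by auto
  show ?thesis
  proof (intro exI[of _ "\<sigma>v * s * \<sigma>u"] conjI)
    show "\<sigma>v * s * \<sigma>u \<in> {1, -1}" using ZB(2) s(1) ZA(2) by auto
    have "(\<sigma>v * s * \<sigma>u) \<cdot>\<^sub>m (adj V * u * V) = (\<sigma>v * s * (\<sigma>u * \<sigma>u)) \<cdot>\<^sub>m (adj V * ZA * V)"
      unfolding uZ by (simp add: smult_smult_mat' mult.assoc)
    also have "\<dots> = v" unfolding ZB(3) s(2) su by (simp add: smult_smult_mat')
    finally show "v = (\<sigma>v * s * \<sigma>u) \<cdot>\<^sub>m (adj V * u * V)" by simp
  qed
qed

lemma fMPS_square_family: "fMPS N n par A \<Longrightarrow> square_family (2*n) N A"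
  by (simp add: fMPS_def square_family_def)

lemma injective_canonical_words_span:
  assumes F: "fMPS N n par A" and I: "injective_plus N n A" and C: "canonical_form N n A"
  obtains l where "\<And>m. l \<le> m \<Longrightarrow> words_span (2*n) N A m"
  using injective_plus_words_span[OF I fMPS_square_family[OF F]]
    words_span_mono[OF fMPS_square_family[OF F] canonical_msum[OF C]] by blast

lemma twisted_trace_equiv_imp_gauge_transform:
  assumes n: "1 \<le> n"
    and FA: "fMPS N n par A" and IA: "injective_plus N n A" and CA: "canonical_form N n A"
    and FB: "fMPS N n par B" and IB: "injective_plus N n B" and CB: "canonical_form N n B"
    and P: "P \<in> carrier_mat (2*n) (2*n)" "P \<noteq> 0\<^sub>m (2*n) (2*n)"
    and Q: "Q \<in> carrier_mat (2*n) (2*n)" "Q * Q = 1\<^sub>m (2*n)"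
    and tr: "\<forall>L. \<exists>\<alpha>::real. \<forall>w\<in>words N L.
      mtrace (P * wprod (2*n) A w) = exp (\<i> * of_real \<alpha>) * mtrace (Q * wprod (2*n) B w)"
  shows "\<exists>V \<beta>. gauge_transform N n A B V \<beta>"
proof -
  obtain lA where spA: "\<And>m. lA \<le> m \<Longrightarrow> words_span (2*n) N A m"
    using injective_canonical_words_span[OF FA IA CA] by blast
  obtain lB where spB: "\<And>m. lB \<le> m \<Longrightarrow> words_span (2*n) N B m"
    using injective_canonical_words_span[OF FB IB CB] by blast
  obtain \<alpha> where \<alpha>: "\<And>L w. w \<in> words N L \<Longrightarrow>
      mtrace (P * wprod (2*n) A w) = exp (\<i> * of_real (\<alpha> L)) * mtrace (Q * wprod (2*n) B w)"
    using tr by metis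
  interpret trace_equiv "2*n" N A B P Q Q "max lA lB" \<alpha>
    using n fMPS_square_family[OF FA] fMPS_square_family[OF FB] canonical_msum[OF CA] canonical_msum[OF CB]
      spA[of "max lA lB"] spB[of "max lA lB"] P Q \<alpha> by unfold_locales auto
  show ?thesis using gauge_transform_exists unfolding gauge_transform_def by blast
qed

lemma gauge_equiv_iff_gauge_transform:
  assumes n: "1 \<le> n"
    and FA: "fMPS N n par A" and IA: "injective_plus N n A" and CA: "canonical_form N n A"
    and FB: "fMPS N n par B" and IB: "injective_plus N n B" and CB: "canonical_form N n B"
  shows "gauge_equiv N n A B \<longleftrightarrow> (\<exists>V \<beta>. gauge_transform N n A B V \<beta>)"
proof
  assume ge: "gauge_equiv N n A B"
  have "1\<^sub>m (2*n) \<noteq> (0\<^sub>m (2*n) (2*n) :: complex mat)"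
  proof
    assume "1\<^sub>m (2*n) = (0\<^sub>m (2*n) (2*n) :: complex mat)"
    then have "(1\<^sub>m (2*n) :: complex mat) $$ (0,0) = (0\<^sub>m (2*n) (2*n) :: complex mat) $$ (0,0)" by (rule arg_cong)
    then show False using n by simp
  qed
  moreover have "\<exists>\<alpha>::real. \<forall>w\<in>words N L.
      mtrace (1\<^sub>m (2*n) * wprod (2*n) A w) = exp (\<i> * of_real \<alpha>) * mtrace (1\<^sub>m (2*n) * wprod (2*n) B w)" for L
  proof -
    obtain \<alpha> :: real where "\<forall>w\<in>words N L. mtrace (wprod (2*n) A w) = exp (\<i> * of_real \<alpha>) * mtrace (wprod (2*n) B w)"
      using ge unfolding gauge_equiv_def by blast
    then show ?thesis
      using square_family_wprod[OF fMPS_square_family[OF FA]] square_family_wprod[OF fMPS_square_family[OF FB]]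
      by (intro exI[of _ \<alpha>]) (metis left_mult_one_mat)
  qed
  ultimately show "\<exists>V \<beta>. gauge_transform N n A B V \<beta>"
    by (intro twisted_trace_equiv_imp_gauge_transform[OF n FA IA CA FB IB CB, of "1\<^sub>m (2*n)" "1\<^sub>m (2*n)"]) auto
next
  assume "\<exists>V \<beta>. gauge_transform N n A B V \<beta>"
  then show "gauge_equiv N n A B" using gauge_transform_imp_gauge_equiv[OF _ fMPS_square_family[OF FA]] by blast
qed

lemma gauge_equiv_PBC_iff_gauge_transform:
  assumes n: "1 \<le> n"
    and FA: "fMPS N n par A" and IA: "injective_plus N n A" and CA: "canonical_form N n A"
    and FB: "fMPS N n par B" and IB: "injective_plus N n B" and CB: "canonical_form N n B"
  shows "gauge_equiv_PBC N n par A B \<longleftrightarrow> (\<exists>V \<beta>. gauge_transform N n A B V \<beta>)"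
proof
  assume "gauge_equiv_PBC N n par A B"
  then obtain u v where uv: "wall_matrix N n par A u" "wall_matrix N n par B v"
    "\<forall>L. \<exists>\<alpha>::real. \<forall>w\<in>words N L. mtrace (u * wprod (2*n) A w) = exp (\<i> * of_real \<alpha>) * mtrace (v * wprod (2*n) B w)"
    unfolding gauge_equiv_PBC_def by blast
  note u = wall_matrix_square[OF uv(1)] and v = wall_matrix_square[OF uv(2)]
  have "u \<noteq> 0\<^sub>m (2*n) (2*n)"
  proof
    assume "u = 0\<^sub>m (2*n) (2*n)"
    then have "(1\<^sub>m (2*n) :: complex mat) $$ (0,0) = (0\<^sub>m (2*n) (2*n) * 0\<^sub>m (2*n) (2*n) :: complex mat) $$ (0,0)"
      using u by simp
    then show False using n by simp
  qed
  then show "\<exists>V \<beta>. gauge_transform N n A B V \<beta>"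
    using twisted_trace_equiv_imp_gauge_transform[OF n FA IA CA FB IB CB u(1) _ v uv(3)] by blast
next
  assume "\<exists>V \<beta>. gauge_transform N n A B V \<beta>"
  then show "gauge_equiv_PBC N n par A B"
    using gauge_transform_imp_gauge_equiv_PBC[OF _ fMPS_square_family[OF FA] FA] by blast
qed

theorem mainTheorem1:
  fixes N n :: nat and par :: "nat \<Rightarrow> nat" and A B :: "nat \<Rightarrow> complex mat"
  assumes "N \<ge> 1" and "n \<ge> 1"
    and "\<forall>i\<in>{1..N}. par i \<in> {0, 1}"
    and "fMPS N n par A" and "injective_plus N n A" and "canonical_form N n A"
    and "fMPS N n par B" and "injective_plus N n B" and "canonical_form N n B"
  shows "(gauge_equiv N n A B \<longleftrightarrow> (\<exists>V \<beta>. gauge_transform N n A B V \<beta>))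
    \<and> (gauge_equiv_PBC N n par A B \<longleftrightarrow> (\<exists>V \<beta>. gauge_transform N n A B V \<beta>))
    \<and> (\<forall>V \<beta> V' \<beta>'. gauge_transform N n A B V \<beta> \<and> gauge_transform N n A B V' \<beta>' \<longrightarrow>
          exp (\<i> * of_real \<beta>) = exp (\<i> * of_real \<beta>') \<and>
          (\<exists>\<theta>::real. V' = exp (\<i> * of_real \<theta>) \<cdot>\<^sub>m V))
    \<and> (\<forall>V \<beta> u v. gauge_transform N n A B V \<beta> \<and> wall_matrix N n par A u \<and> wall_matrix N n par B v \<longrightarrow>
          (\<exists>\<eta>::complex. \<eta> \<in> {1, -1} \<and> v = \<eta> \<cdot>\<^sub>m (adj V * u * V)))"
proof -
  have d: "0 < 2*n" using assms(2) by simp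
  obtain lA where spA: "\<And>m. lA \<le> m \<Longrightarrow> words_span (2*n) N A m"
    using injective_canonical_words_span[OF assms(4-6)] by blast
  obtain lB where spB: "\<And>m. lB \<le> m \<Longrightarrow> words_span (2*n) N B m"
    using injective_canonical_words_span[OF assms(7-9)] by blast
  have spA': "words_span (2*n) N A (Suc lA)" and spB': "words_span (2*n) N B (Suc lB)"
    using spA spB by auto
  note cA = fMPS_square_family[OF assms(4)] and cB = fMPS_square_family[OF assms(7)]
  have "\<forall>V \<beta> V' \<beta>'. gauge_transform N n A B V \<beta> \<and> gauge_transform N n A B V' \<beta>' \<longrightarrow>
      exp (\<i> * of_real \<beta>) = exp (\<i> * of_real \<beta>') \<and> (\<exists>\<theta>::real. V' = exp (\<i> * of_real \<theta>) \<cdot>\<^sub>m V)"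
    using gauge_transform_unique[OF d cA spA' zero_less_Suc] by blast
  moreover have "\<forall>V \<beta> u v. gauge_transform N n A B V \<beta> \<and> wall_matrix N n par A u \<and> wall_matrix N n par B v \<longrightarrow>
      (\<exists>\<eta>::complex. \<eta> \<in> {1, -1} \<and> v = \<eta> \<cdot>\<^sub>m (adj V * u * V))"
    using gauge_transform_wall_matrix[OF d cB spB' zero_less_Suc cA] by blast
  ultimately show ?thesis
    using gauge_equiv_iff_gauge_transform[OF assms(2,4-9)] gauge_equiv_PBC_iff_gauge_transform[OF assms(2,4-9)]
    by (intro conjI)
qed

end
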